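(* Let $\gamma\in(0,+\infty)\setminus\mathbb N$, $f\in C^\infty(\mathbb S^n)$ and $m\in\mathbb N\cup\{0\}$. Then $B^{2\gamma}_{2j}(\rho^{2[\gamma]+2m}f)=0$ for $0\le j\le\lfloor\gamma/2\rfloor$, and $B^{2\gamma}_{2j+2[\gamma]}(\rho^{2m}f)=0$ for $0\le j\le\lfloor\gamma\rfloor-\lfloor\gamma/2\rfloor-1$.
   Context: $n\ge1$, $\mathbb B^{n+1}$ the unit ball in $\mathbb R^{n+1}$, $x=r\theta$, functions on $\mathbb S^n$ extended by $f(r\theta)=f(\theta)$; $\mathbb N=\{1,2,\dots\}$. $g_{\mathbb B}=\frac{4|dx|^2}{(1-|x|^2)^2}$, $\Delta_+$ its Laplace–Beltrami operator, $\rho=\frac{2(1-r)}{1+r}$. $\lfloor\gamma\rfloor$ integer part, $[\gamma]=\gamma-\lfloor\gamma\rfloor$, $s=\frac n2+\gamma$, $D_t=-\Delta_+-t(n-t)$. Boundary operators (small indices): $B^{2\gamma}_0(U)=U|_{\rho=0}$; for $1\le j\le\lfloor\gamma/2\rfloor$, $B^{2\gamma}_{2j}(U)=\frac1{b_{2j}}\rho^{-\frac n2+\gamma-2j}\prod_{l=0}^{j-1}D_{s-2l}\prod_{l=\lfloor\gamma\rfloor-j+1}^{\lfloor\gamma\rfloor}D_{s-2l}(\rho^{\frac n2-\gamma}U)|_{\rho=0}$; for $0\le j\le\lfloor\gamma\rfloor-\lfloor\gamma/2\rfloor-1$, $B^{2\gamma}_{2j+2[\gamma]}(U)=\frac{-1}{b_{2j+2[\gamma]}}\rho^{-\frac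 n2+\gamma-2j-2[\gamma]}\prod_{l=0}^{j}D_{s-2l}\prod_{l=\lfloor\gamma\rfloor-j+1}^{\lfloor\gamma\rfloor}D_{s-2l}(\rho^{\frac n2-\gamma}U)|_{\rho=0}$, where the nonzero constants are chosen so that $B^{2\gamma}_{2j}(\rho^{2j})=1$ and $B^{2\gamma}_{2j+2[\gamma]}(\rho^{2j+2[\gamma]})=1$. *)

theory Defs
  imports "HOL-Analysis.Analysis"
begin

text \<open>The ball B^{n+1} lives in a Euclidean space 'a with DIM('a) = n+1.
  Functions are real valued and total; only their values on the punctured open
  ball matter (all derivatives below are local).\<close>

definition dimn :: "'a::euclidean_space itself \<Rightarrow> real" where
  "dimn _ = real DIM('a) - 1"

fun Ck :: "nat \<Rightarrow> 'a::euclidean_space set \<Rightarrow> ('a \<Rightarrow> real) \<Rightarrow> bool" where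
  "Ck 0 S u = continuous_on S u"
| "Ck (Suc k) S u = ((\<forall>x\<in>S. u differentiable (at x)) \<and>
      (\<forall>v. Ck k S (\<lambda>x. frechet_derivative u (at x) v)))"

definition smooth_on :: "'a::euclidean_space set \<Rightarrow> ('a \<Rightarrow> real) \<Rightarrow> bool" where
  "smooth_on S u \<longleftrightarrow> (\<forall>k. Ck k S u)"

text \<open>f in C^infinity(S^n): its 0-homogeneous extension f(x/|x|) is smooth on R^{n+1} minus 0.\<close>
definition smooth_on_sphere :: "('a::euclidean_space \<Rightarrow> real) \<Rightarrow> bool" where
  "smooth_on_sphere f \<longleftrightarrow> smooth_on (- {0}) (\<lambda>x. f (x /\<^sub>R norm x))"

definition rho :: "'a::real_normed_vector \<Rightarrow> real" where
  "rho x = 2 * (1 - norm x) / (1 + norm x)"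

definition pd :: "'a::euclidean_space \<Rightarrow> ('a \<Rightarrow> real) \<Rightarrow> 'a \<Rightarrow> real" where
  "pd v u = (\<lambda>x. frechet_derivative u (at x) v)"

definition lap :: "('a::euclidean_space \<Rightarrow> real) \<Rightarrow> 'a \<Rightarrow> real" where
  "lap u = (\<lambda>x. \<Sum>b\<in>Basis. pd b (pd b u) x)"

text \<open>Laplace--Beltrami operator of g_B = 4|dx|^2/(1-|x|^2)^2 on B^{n+1}
  (conformal metric e^{2 phi}|dx|^2, Delta_g u = e^{-2 phi}(Delta u + (n-1) grad phi . grad u)).\<close>
definition hyp_lap :: "('a::euclidean_space \<Rightarrow> real) \<Rightarrow> 'a \<Rightarrow> real" where
  "hyp_lap u = (\<lambda>x. (1 - (norm x)\<^sup>2)\<^sup>2 / 4 * lap u x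
      + (dimn TYPE('a) - 1) * (1 - (norm x)\<^sup>2) / 2 * pd x u x)"

definition Dop :: "real \<Rightarrow> ('a::euclidean_space \<Rightarrow> real) \<Rightarrow> 'a \<Rightarrow> real" where
  "Dop t u = (\<lambda>x. - hyp_lap u x - t * (dimn TYPE('a) - t) * u x)"

definition Ds :: "real list \<Rightarrow> ('a::euclidean_space \<Rightarrow> real) \<Rightarrow> 'a \<Rightarrow> real" where
  "Ds ts u = foldr Dop ts u"

definition fracg :: "real \<Rightarrow> real" where
  "fracg \<gamma> = \<gamma> - of_int \<lfloor>\<gamma>\<rfloor>"

definition sval :: "'a::euclidean_space itself \<Rightarrow> real \<Rightarrow> real" where
  "sval T \<gamma> = dimn T / 2 + \<gamma>"

definition raw_even :: "real \<Rightarrow> nat \<Rightarrow> ('a::euclidean_space \<Rightarrow> real) \<Rightarrow> 'a \<Rightarrow> real" where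
  "raw_even \<gamma> j U = (\<lambda>x. rho x powr (- dimn TYPE('a) / 2 + \<gamma> - 2 * real j) *
     Ds (map (\<lambda>l. sval TYPE('a) \<gamma> - 2 * real l) ([0..<j] @ [nat \<lfloor>\<gamma>\<rfloor> + 1 - j ..< nat \<lfloor>\<gamma>\<rfloor> + 1]))
        (\<lambda>y. rho y powr (dimn TYPE('a) / 2 - \<gamma>) * U y) x)"

definition raw_odd :: "real \<Rightarrow> nat \<Rightarrow> ('a::euclidean_space \<Rightarrow> real) \<Rightarrow> 'a \<Rightarrow> real" where
  "raw_odd \<gamma> j U = (\<lambda>x. rho x powr (- dimn TYPE('a) / 2 + \<gamma> - 2 * real j - 2 * fracg \<gamma>) *
     Ds (map (\<lambda>l. sval TYPE('a) \<gamma> - 2 * real l) ([0..<j+1] @ [nat \<lfloor>\<gamma>\<rfloor> + 1 - j ..< nat \<lfloor>\<gamma>\<rfloor> + 1]))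
        (\<lambda>y. rho y powr (dimn TYPE('a) / 2 - \<gamma>) * U y) x)"

text \<open>Restriction to rho = 0 (i.e. r -> 1^-) along the ray through theta.\<close>
definition bdry :: "('a::real_normed_vector \<Rightarrow> real) \<Rightarrow> 'a \<Rightarrow> real" where
  "bdry V \<theta> = Lim (at_left 1) (\<lambda>r. V (r *\<^sub>R \<theta>))"

text \<open>Normalising constants b_{2j}, b_{2j+2[gamma]}: chosen so that B(rho^{2j}) = 1,
  resp. B(rho^{2j+2[gamma]}) = 1 (evaluated along the ray through x/|x|; they are radial).\<close>
definition b_even :: "real \<Rightarrow> nat \<Rightarrow> 'a::euclidean_space \<Rightarrow> real" where
  "b_even \<gamma> j x = bdry (raw_even \<gamma> j (\<lambda>y. rho y ^ (2 * j))) (x /\<^sub>R norm x)"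

definition b_odd :: "real \<Rightarrow> nat \<Rightarrow> 'a::euclidean_space \<Rightarrow> real" where
  "b_odd \<gamma> j x = - bdry (raw_odd \<gamma> j (\<lambda>y. rho y powr (2 * real j + 2 * fracg \<gamma>))) (x /\<^sub>R norm x)"

text \<open>The expressions whose restriction to rho = 0 defines B^{2 gamma}_{2j} and B^{2 gamma}_{2j+2[gamma]}.\<close>
definition Bpre_even :: "real \<Rightarrow> nat \<Rightarrow> ('a::euclidean_space \<Rightarrow> real) \<Rightarrow> 'a \<Rightarrow> real" where
  "Bpre_even \<gamma> j U = (\<lambda>x. if j = 0 then U x else (1 / b_even \<gamma> j x) * raw_even \<gamma> j U x)"

definition Bpre_odd :: "real \<Rightarrow> nat \<Rightarrow> ('a::euclidean_space \<Rightarrow> real) \<Rightarrow> 'a \<Rightarrow> real" where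
  "Bpre_odd \<gamma> j U = (\<lambda>x. (- 1 / b_odd \<gamma> j x) * raw_odd \<gamma> j U x)"

end

theory Submission
  imports Defs
begin

text \<open>
  Call a function of order \<open>b\<close> if it is a finite sum of terms \<open>\<rho>\<^sup>b Q(\<rho>\<^sup>2) g\<close> with \<open>g\<close> smooth
  and homogeneous of degree 0 and \<open>Q\<close> regular at 0. Writing \<open>\<Delta>\<^sub>+\<close> in the variable \<open>\<rho>\<close> shows
  that \<open>D\<^sub>t\<close> preserves order \<open>b\<close> and acts on the leading term as multiplication by the
  indicial polynomial \<open>(b - t)(n - b - t)\<close>; at a root, \<open>D\<^sub>t\<close> raises the order by 2.

  In \<open>B\<^bsub>2j\<^esub>(\<rho>\<^bsup>2[\<gamma>]+2m\<^esup> f)\<close> the function \<open>\<rho>\<^bsup>n/2-\<gamma>+2[\<gamma>]+2m\<^esup> f\<close> has order at least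
  \<open>s - 2\<lfloor>\<gamma>\<rfloor>\<close>; the innermost operators \<open>D\<^bsub>s-2\<lfloor>\<gamma>\<rfloor>\<^esub>, D\<^bsub>s-2\<lfloor>\<gamma>\<rfloor>+2\<^esub>, \<dots>\<close> each act at the
  root \<open>b = t\<close>, the others preserve the order, and after the final factor \<open>\<rho>\<^bsup>-n/2+\<gamma>-2j\<^esup>\<close>
  the order is \<open>2[\<gamma>] > 0\<close>. In \<open>B\<^bsub>2j+2[\<gamma>]\<^esub>(\<rho>\<^bsup>2m\<^esup> f)\<close> one starts at order
  \<open>n - s\<close> and, since the \<open>D\<^sub>t\<close> commute, may apply \<open>D\<^sub>s, D\<^bsub>s-2\<^esub>, \<dots>, D\<^bsub>s-2j\<^esub>\<close> in this order,
  each at the root \<open>b = n - t\<close>; the result has order \<open>2 - 2[\<gamma>] > 0\<close>. A function of positive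
  order tends to 0 along every ray towards the boundary sphere.
\<close>

section \<open>Locality and linearity of the operators\<close>

lemma frechet_derivative_cong_open:
  assumes "open S" "x \<in> S" "\<And>y. y \<in> S \<Longrightarrow> u y = v y"
  shows "frechet_derivative u (at x) = frechet_derivative v (at x)"
proof -
  have "(u has_derivative D) (at x) \<longleftrightarrow> (v has_derivative D) (at x)" for D
    using has_derivative_transform_within_open[OF _ assms(1,2), of u _ UNIV v]
          has_derivative_transform_within_open[OF _ assms(1,2), of v _ UNIV u] assms(3)
    by auto
  then show ?thesis unfolding frechet_derivative_def by simp
qed

lemma pd_cong_open:
  assumes "open S" "x \<in> S" "\<And>y. y \<in> S \<Longrightarrow> u y = v y"
  shows "pd w u x = pd w v x"
  unfolding pd_def using frechet_derivative_cong_open[OF assms] by simp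

lemma differentiable_cong_open:
  assumes "u differentiable (at x)" "open S" "x \<in> S" "\<And>y. y \<in> S \<Longrightarrow> u y = v y"
  shows "v differentiable (at x)"
  using assms has_derivative_transform_within_open unfolding differentiable_def by blast

lemma lap_cong_open:
  assumes "open S" "x \<in> S" "\<And>y. y \<in> S \<Longrightarrow> u y = v y"
  shows "lap u x = lap v x"
proof -
  have "pd b u y = pd b v y" if "y \<in> S" for b y
    using pd_cong_open[OF assms(1) that] assms(3) by blast
  then have "pd b (pd b u) x = pd b (pd b v) x" for b
    by (rule pd_cong_open[OF assms(1,2)])
  then show ?thesis unfolding lap_def by simp
qed

lemma hyp_lap_cong_open:
  assumes "open S" "x \<in> S" "\<And>y. y \<in> S \<Longrightarrow> u y = v y"
  shows "hyp_lap u x = hyp_lap v x"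
  unfolding hyp_lap_def using lap_cong_open[OF assms] pd_cong_open[OF assms] by simp

lemma Dop_cong_open:
  assumes "open S" "x \<in> S" "\<And>y. y \<in> S \<Longrightarrow> u y = v y"
  shows "Dop t u x = Dop t v x"
  unfolding Dop_def using hyp_lap_cong_open[OF assms] assms by simp

lemma pd_lincomb:
  assumes "u differentiable (at x)" "v differentiable (at x)"
  shows "pd w (\<lambda>y. a * u y + c * v y) x = a * pd w u x + c * pd w v x"
proof -
  have "((\<lambda>y. a * u y + c * v y) has_derivative
      (\<lambda>h. a * frechet_derivative u (at x) h + c * frechet_derivative v (at x) h)) (at x)"
    using assms[unfolded frechet_derivative_works] by (auto intro!: derivative_eq_intros)
  then show ?thesis unfolding pd_def by (simp flip: frechet_derivative_at)
qed

lemma pd_mult: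
  assumes "u differentiable (at x)" "v differentiable (at x)"
  shows "pd w (\<lambda>y. u y * v y) x = pd w u x * v x + u x * pd w v x"
proof -
  have "((\<lambda>y. u y * v y) has_derivative
      (\<lambda>h. u x * frechet_derivative v (at x) h + frechet_derivative u (at x) h * v x)) (at x)"
    using assms[unfolded frechet_derivative_works] by (auto intro!: derivative_eq_intros)
  then show ?thesis unfolding pd_def by (simp flip: frechet_derivative_at)
qed

definition twice_differentiable_on :: "'a::euclidean_space set \<Rightarrow> ('a \<Rightarrow> real) \<Rightarrow> bool" where
  "twice_differentiable_on S u \<longleftrightarrow>
     (\<forall>x\<in>S. u differentiable (at x) \<and> (\<forall>v. pd v u differentiable (at x)))"

lemma twice_differentiable_onD:
  assumes "twice_differentiable_on S u" "x \<in> S"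
  shows "u differentiable (at x)" "pd v u differentiable (at x)"
  using assms unfolding twice_differentiable_on_def by auto

lemma twice_differentiable_onI:
  assumes "open S"
    and "\<And>x. x \<in> S \<Longrightarrow> u differentiable (at x)"
    and "\<And>v x. x \<in> S \<Longrightarrow> g v differentiable (at x)"
    and "\<And>v y. y \<in> S \<Longrightarrow> pd v u y = g v y"
  shows "twice_differentiable_on S u"
  unfolding twice_differentiable_on_def
  using assms differentiable_cong_open[OF _ assms(1)] by metis

lemma twice_differentiable_on_cong:
  assumes "open S" "twice_differentiable_on S u" "\<And>y. y \<in> S \<Longrightarrow> u y = v y"
  shows "twice_differentiable_on S v"
proof (rule twice_differentiable_onI[OF assms(1), where g = "\<lambda>w. pd w u"])
  show "v differentiable (at x)" if "x \<in> S" for x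
    using differentiable_cong_open[OF twice_differentiable_onD(1)[OF assms(2) that] assms(1) that]
      assms(3) by blast
  show "pd w u differentiable (at x)" if "x \<in> S" for w x
    using twice_differentiable_onD(2)[OF assms(2) that] .
  show "pd w v y = pd w u y" if "y \<in> S" for w y
    using pd_cong_open[OF assms(1) that] assms(3) by metis
qed

lemma twice_differentiable_on_lincomb:
  assumes "open S" "twice_differentiable_on S u" "twice_differentiable_on S v"
  shows "twice_differentiable_on S (\<lambda>y. a * u y + c * v y)"
proof (rule twice_differentiable_onI[OF assms(1), where g = "\<lambda>w y. a * pd w u y + c * pd w v y"])
  show "(\<lambda>y. a * u y + c * v y) differentiable (at x)" if "x \<in> S" for x
    using twice_differentiable_onD(1)[OF assms(2) that] twice_differentiable_onD(1)[OF assms(3) that]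
    by (auto intro!: derivative_intros)
  show "(\<lambda>y. a * pd w u y + c * pd w v y) differentiable (at x)" if "x \<in> S" for w x
    using twice_differentiable_onD(2)[OF assms(2) that] twice_differentiable_onD(2)[OF assms(3) that]
    by (auto intro!: derivative_intros)
  show "pd w (\<lambda>y. a * u y + c * v y) y = a * pd w u y + c * pd w v y" if "y \<in> S" for w y
    using pd_lincomb twice_differentiable_onD(1) assms(2,3) that by metis
qed

lemma twice_differentiable_on_mult:
  assumes "open S" "twice_differentiable_on S u" "twice_differentiable_on S v"
  shows "twice_differentiable_on S (\<lambda>y. u y * v y)"
proof (rule twice_differentiable_onI[OF assms(1), where g = "\<lambda>w y. pd w u y * v y + u y * pd w v y"])
  show "(\<lambda>y. u y * v y) differentiable (at x)" if "x \<in> S" for x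
    using twice_differentiable_onD(1)[OF assms(2) that] twice_differentiable_onD(1)[OF assms(3) that]
    by (auto intro!: derivative_intros)
  show "(\<lambda>y. pd w u y * v y + u y * pd w v y) differentiable (at x)" if "x \<in> S" for w x
    using twice_differentiable_onD[OF assms(2) that] twice_differentiable_onD[OF assms(3) that]
    by (auto intro!: derivative_intros)
  show "pd w (\<lambda>y. u y * v y) y = pd w u y * v y + u y * pd w v y" if "y \<in> S" for w y
    using pd_mult twice_differentiable_onD(1) assms(2,3) that by metis
qed

lemma lap_lincomb:
  assumes "open S" "twice_differentiable_on S u" "twice_differentiable_on S v" "x \<in> S"
  shows "lap (\<lambda>y. a * u y + c * v y) x = a * lap u x + c * lap v x"
proof -
  note d1 = twice_differentiable_onD(1)[OF assms(2)] twice_differentiable_onD(1)[OF assms(3)]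
  note d2 = twice_differentiable_onD(2)[OF assms(2,4)] twice_differentiable_onD(2)[OF assms(3,4)]
  have "pd b (\<lambda>y. a * u y + c * v y) y = a * pd b u y + c * pd b v y" if "y \<in> S" for b y
    using pd_lincomb d1 that by blast
  then have "pd b (pd b (\<lambda>y. a * u y + c * v y)) x = pd b (\<lambda>y. a * pd b u y + c * pd b v y) x" for b
    by (intro pd_cong_open[OF assms(1,4)])
  also have "\<dots> b = a * pd b (pd b u) x + c * pd b (pd b v) x" for b
    using pd_lincomb d2 by blast
  finally show ?thesis unfolding lap_def by (simp add: sum.distrib sum_distrib_left)
qed

lemma lap_mult:
  assumes "open S" "twice_differentiable_on S u" "twice_differentiable_on S v" "x \<in> S"
  shows "lap (\<lambda>y. u y * v y) x
    = lap u x * v x + 2 * (\<Sum>b\<in>Basis. pd b u x * pd b v x) + u x * lap v x"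
proof -
  note d1 = twice_differentiable_onD(1)[OF assms(2)] twice_differentiable_onD(1)[OF assms(3)]
  note d2 = twice_differentiable_onD(2)[OF assms(2,4)] twice_differentiable_onD(2)[OF assms(3,4)]
  have "pd b (\<lambda>y. u y * v y) y = 1 * (pd b u y * v y) + 1 * (u y * pd b v y)" if "y \<in> S" for b y
    using pd_mult[OF d1[OF that]] by simp
  then have "pd b (pd b (\<lambda>y. u y * v y)) x
      = pd b (\<lambda>y. 1 * (pd b u y * v y) + 1 * (u y * pd b v y)) x" for b
    by (intro pd_cong_open[OF assms(1,4)])
  also have "\<dots> b = pd b (\<lambda>y. pd b u y * v y) x + pd b (\<lambda>y. u y * pd b v y) x" for b
  proof -
    have "(\<lambda>y. pd b u y * v y) differentiable (at x)" "(\<lambda>y. u y * pd b v y) differentiable (at x)"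
      using d1 d2 assms(4) by (auto intro: differentiable_mult)
    from pd_lincomb[OF this, of b 1 1] show ?thesis by simp
  qed
  also have "\<dots> b = pd b (pd b u) x * v x + 2 * (pd b u x * pd b v x) + u x * pd b (pd b v) x" for b
    using pd_mult[OF d2(1) d1(2)[OF assms(4)]] pd_mult[OF d1(1)[OF assms(4)] d2(2)] by simp
  finally show ?thesis
    unfolding lap_def by (simp add: sum.distrib sum_distrib_left sum_distrib_right)
qed

lemma hyp_lap_lincomb:
  assumes "open S" "twice_differentiable_on S u" "twice_differentiable_on S v" "x \<in> S"
  shows "hyp_lap (\<lambda>y. a * u y + c * v y) x = a * hyp_lap u x + c * hyp_lap v x"
proof -
  have "pd x (\<lambda>y. a * u y + c * v y) x = a * pd x u x + c * pd x v x"
    using pd_lincomb twice_differentiable_onD(1) assms(2,3,4) by metis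
  then show ?thesis
    unfolding hyp_lap_def lap_lincomb[OF assms] by (simp add: field_simps)
qed

lemma Dop_lincomb:
  assumes "open S" "twice_differentiable_on S u" "twice_differentiable_on S v" "x \<in> S"
  shows "Dop t (\<lambda>y. a * u y + c * v y) x = a * Dop t u x + c * Dop t v x"
  unfolding Dop_def hyp_lap_lincomb[OF assms] by (simp add: algebra_simps)

lemma Dop_commute:
  assumes "open S" "twice_differentiable_on S u" "twice_differentiable_on S (hyp_lap u)" "x \<in> S"
  shows "Dop t (Dop t' u) x = Dop t' (Dop t u) x"
proof -
  let ?n = "dimn TYPE('a)"
  have e: "Dop t' u = (\<lambda>y. (-1) * hyp_lap u y + (- t' * (?n - t')) * u y)" for t'
    unfolding Dop_def by (simp add: fun_eq_iff)
  have "Dop t (Dop t' u) x = - Dop t (hyp_lap u) x - t' * (?n - t') * Dop t u x" for t t'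
    unfolding e[of t'] Dop_lincomb[OF assms(1,3,2,4)] by simp
  from this[of t t'] this[of t' t] show ?thesis by (simp add: Dop_def algebra_simps)
qed

section \<open>Smooth functions\<close>

lemma Ck_Suc_pd:
  "Ck (Suc k) S u \<longleftrightarrow> (\<forall>x\<in>S. u differentiable (at x)) \<and> (\<forall>v. Ck k S (pd v u))"
  by (simp add: pd_def)

lemma Ck_cong_open:
  assumes "open S" "Ck k S u" "\<And>y. y \<in> S \<Longrightarrow> u y = v y"
  shows "Ck k S v"
  using assms(2,3)
proof (induction k arbitrary: u v)
  case 0
  then show ?case using continuous_on_cong by force
next
  case (Suc k)
  have "v differentiable (at x)" if "x \<in> S" for x
    using Suc.prems differentiable_cong_open[OF _ assms(1) that] that by auto
  moreover have "Ck k S (pd w v)" for w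
  proof (rule Suc.IH)
    show "Ck k S (pd w u)" using Suc.prems(1) unfolding Ck_Suc_pd by blast
    show "pd w u y = pd w v y" if "y \<in> S" for y
      using pd_cong_open[OF assms(1) that] Suc.prems(2) by blast
  qed
  ultimately show ?case unfolding Ck_Suc_pd by blast
qed

lemma Ck_SucD: "Ck (Suc k) S u \<Longrightarrow> Ck k S u"
proof (induction k arbitrary: u)
  case 0
  then show ?case
    by (auto intro!: continuous_at_imp_continuous_on differentiable_imp_continuous_within)
next
  case (Suc k)
  then show ?case by simp
qed

lemma Ck_const: "Ck k S (\<lambda>x. c)"
proof (induction k arbitrary: c)
  case 0
  then show ?case by simp
next
  case (Suc k)
  have "frechet_derivative (\<lambda>x. c) (at x) = (\<lambda>h. 0)" for x
    using frechet_derivative_at[OF has_derivative_const[of c "at x"]] by simp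
  then show ?case using Suc by simp
qed

lemma Ck_lincomb:
  assumes "open S" "Ck k S u" "Ck k S v"
  shows "Ck k S (\<lambda>x. a * u x + c * v x)"
  using assms(2,3)
proof (induction k arbitrary: u v a c)
  case 0
  then show ?case by (auto intro!: continuous_intros)
next
  case (Suc k)
  then have d: "\<And>x. x \<in> S \<Longrightarrow> u differentiable (at x)" "\<And>x. x \<in> S \<Longrightarrow> v differentiable (at x)"
    and pd: "\<And>w. Ck k S (pd w u)" "\<And>w. Ck k S (pd w v)"
    unfolding Ck_Suc_pd by blast+
  have "Ck k S (pd w (\<lambda>x. a * u x + c * v x))" for w
  proof (rule Ck_cong_open[OF assms(1)])
    show "Ck k S (\<lambda>x. a * pd w u x + c * pd w v x)"
      using Suc.IH pd by blast
    show "a * pd w u y + c * pd w v y = pd w (\<lambda>x. a * u x + c * v x) y" if "y \<in> S" for y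
      using pd_lincomb[OF d[OF that]] by simp
  qed
  with d show ?case unfolding Ck_Suc_pd by (auto intro!: derivative_intros)
qed

lemma Ck_mult:
  assumes "open S" "Ck k S u" "Ck k S v"
  shows "Ck k S (\<lambda>x. u x * v x)"
  using assms(2,3)
proof (induction k arbitrary: u v)
  case 0
  then show ?case by (auto intro!: continuous_intros)
next
  case (Suc k)
  then have d: "\<And>x. x \<in> S \<Longrightarrow> u differentiable (at x)" "\<And>x. x \<in> S \<Longrightarrow> v differentiable (at x)"
    and pd: "\<And>w. Ck k S (pd w u)" "\<And>w. Ck k S (pd w v)"
    unfolding Ck_Suc_pd by blast+
  have "Ck k S (pd w (\<lambda>x. u x * v x))" for w
  proof (rule Ck_cong_open[OF assms(1)])
    show "Ck k S (\<lambda>x. 1 * (pd w u x * v x) + 1 * (u x * pd w v x))"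
      using Suc.IH pd Ck_SucD[OF Suc.prems(1)] Ck_SucD[OF Suc.prems(2)]
      by (intro Ck_lincomb[OF assms(1)]) blast+
    show "1 * (pd w u y * v y) + 1 * (u y * pd w v y) = pd w (\<lambda>x. u x * v x) y" if "y \<in> S" for y
      using pd_mult[OF d[OF that]] by simp
  qed
  with d show ?case unfolding Ck_Suc_pd by (auto intro!: derivative_intros)
qed

lemma Ck_sum:
  assumes "open S" "finite B" "\<And>b. b \<in> B \<Longrightarrow> Ck k S (f b)"
  shows "Ck k S (\<lambda>x. \<Sum>b\<in>B. f b x)"
  using assms(2,3)
proof (induction B rule: finite_induct)
  case empty
  then show ?case using Ck_const[of k S 0] by simp
next
  case (insert b B)
  then have "Ck k S (\<lambda>x. 1 * f b x + 1 * (\<Sum>b\<in>B. f b x))"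
    by (intro Ck_lincomb[OF assms(1)]) auto
  then show ?case using insert by simp
qed

lemma Ck_inner_left: "Ck k S (\<lambda>x. x \<bullet> a)"
proof (cases k)
  case 0
  then show ?thesis by (simp add: continuous_intros)
next
  case (Suc k')
  have "frechet_derivative (\<lambda>x. x \<bullet> a) (at x) = (\<lambda>h. h \<bullet> a)" for x
    by (rule sym, rule frechet_derivative_at, rule bounded_linear_imp_has_derivative)
       (rule bounded_linear_inner_left)
  with Suc show ?thesis
    by (simp add: Ck_const bounded_linear_imp_differentiable[OF bounded_linear_inner_left])
qed

lemma Ck_inner_self:
  assumes "open S"
  shows "Ck k S (\<lambda>x::'a::euclidean_space. x \<bullet> x)"
proof (cases k)
  case 0
  then show ?thesis by (simp add: continuous_intros)
next
  case (Suc k')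
  have "frechet_derivative (\<lambda>x. x \<bullet> x) (at x) = (\<lambda>h. 2 * (x \<bullet> h))" for x :: 'a
    by (rule sym, rule frechet_derivative_at) (auto intro!: derivative_eq_intros simp: inner_commute)
  moreover have "Ck k' S (\<lambda>x. 2 * (x \<bullet> v) + 0 * 0)" for v
    by (rule Ck_lincomb[OF assms Ck_inner_left Ck_const])
  ultimately show ?thesis
    using Suc by (simp add: inner_commute differentiable_inner)
qed

section \<open>Functions homogeneous of degree zero\<close>

definition smooth_hom0 :: "('a::euclidean_space \<Rightarrow> real) \<Rightarrow> bool" where
  "smooth_hom0 g \<longleftrightarrow> smooth_on (- {0}) g \<and> (\<forall>x c. x \<noteq> 0 \<longrightarrow> 0 < c \<longrightarrow> g (c *\<^sub>R x) = g x)"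

lemma smooth_hom0_scaleR: "smooth_hom0 g \<Longrightarrow> x \<noteq> 0 \<Longrightarrow> 0 < c \<Longrightarrow> g (c *\<^sub>R x) = g x"
  unfolding smooth_hom0_def by blast

lemma smooth_hom0_twice_differentiable:
  assumes "smooth_hom0 g"
  shows "twice_differentiable_on (- {0}) g"
proof -
  have "Ck 2 (- {0}) g" using assms unfolding smooth_hom0_def smooth_on_def by blast
  then show ?thesis
    unfolding twice_differentiable_on_def numeral_2_eq_2 by (simp add: pd_def)
qed

lemma smooth_on_sphere_imp_smooth_hom0:
  assumes "smooth_on_sphere f"
  shows "smooth_hom0 (\<lambda>x. f (x /\<^sub>R norm x))"
proof -
  have "(\<lambda>x. f (x /\<^sub>R norm x)) (c *\<^sub>R x) = f (x /\<^sub>R norm x)" if "0 < c" for x :: 'a and c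
  proof -
    have "(c *\<^sub>R x) /\<^sub>R norm (c *\<^sub>R x) = x /\<^sub>R norm x"
      unfolding sgn_div_norm[symmetric] sgn_scaleR using that by simp
    then show ?thesis by (simp only:)
  qed
  then show ?thesis using assms unfolding smooth_hom0_def smooth_on_sphere_def by auto
qed

lemma pd_scaleR_homogeneous:
  fixes w :: "'a::euclidean_space \<Rightarrow> real"
  assumes "0 < c" "y \<noteq> 0"
    and hom: "\<And>y. y \<noteq> 0 \<Longrightarrow> w (c *\<^sub>R y) = a * w y"
    and diff: "\<And>y. y \<noteq> 0 \<Longrightarrow> w differentiable (at y)"
  shows "pd v w (c *\<^sub>R y) = (a / c) * pd v w y"
proof -
  define Dc where "Dc = frechet_derivative w (at (c *\<^sub>R y))"
  define Dy where "Dy = frechet_derivative w (at y)"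
  have wc: "(w has_derivative Dc) (at (c *\<^sub>R y))"
    unfolding Dc_def frechet_derivative_works[symmetric] using diff assms(1,2) by simp
  have wy: "(w has_derivative Dy) (at y)"
    unfolding Dy_def using diff assms(2) frechet_derivative_works by blast
  have "((\<lambda>z. a * w z) has_derivative (\<lambda>h. a * Dy h)) (at y)"
    using wy by (auto intro!: derivative_eq_intros)
  then have "((\<lambda>z. w (c *\<^sub>R z)) has_derivative (\<lambda>h. a * Dy h)) (at y)"
    by (rule has_derivative_transform_within_open[where s = "- {0}"]) (use assms(2) hom in auto)
  moreover have "((\<lambda>z. w (c *\<^sub>R z)) has_derivative (\<lambda>h. Dc (c *\<^sub>R h))) (at y)"
    using diff_chain_at[OF bounded_linear_imp_has_derivative[OF bounded_linear_scaleR_right] wc]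
    by (simp add: o_def)
  ultimately have "Dc (c *\<^sub>R v) = a * Dy v"
    using has_derivative_unique by metis
  moreover have "Dc (c *\<^sub>R v) = c * Dc v"
    using has_derivative_linear[OF wc] by (simp add: linear_scale)
  ultimately show ?thesis
    unfolding pd_def Dc_def[symmetric] Dy_def[symmetric] using assms(1) by (simp add: field_simps)
qed

lemma pd_self_eq_0:
  assumes "g differentiable (at x)" "\<And>c. 0 < c \<Longrightarrow> g (c *\<^sub>R x) = g x"
  shows "pd x g x = 0"
proof -
  define D where "D = frechet_derivative g (at x)"
  have "(g has_derivative D) (at x)" unfolding D_def using assms(1) frechet_derivative_works by blast
  moreover have "((\<lambda>t::real. t *\<^sub>R x) has_derivative (\<lambda>h. h *\<^sub>R x)) (at 1)"
    by (rule bounded_linear_imp_has_derivative) (rule bounded_linear_scaleR_left)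
  ultimately have "((\<lambda>t. g (t *\<^sub>R x)) has_derivative (\<lambda>h. D (h *\<^sub>R x))) (at 1)"
    using diff_chain_at by (fastforce simp: o_def)
  moreover have "((\<lambda>t. g (t *\<^sub>R x)) has_derivative (\<lambda>h. 0)) (at 1)"
    by (rule has_derivative_transform_within_open[OF has_derivative_const[of "g x"], of "{0<..}"])
       (use assms(2) in auto)
  ultimately have "D (1 *\<^sub>R x) = 0"
    using has_derivative_unique by metis
  then show ?thesis unfolding pd_def D_def by simp
qed

lemma pd_euclidean:
  fixes y :: "'a::euclidean_space"
  assumes "g differentiable (at x)"
  shows "pd y g x = (\<Sum>b\<in>Basis. (y \<bullet> b) * pd b g x)"
proof -
  have "linear (frechet_derivative g (at x))"
    using has_derivative_linear assms frechet_derivative_works by blast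
  then show ?thesis
    unfolding pd_def by (subst euclidean_representation[symmetric, of y]) (simp add: linear_sum linear_scale)
qed

definition norm2_lap :: "('a::euclidean_space \<Rightarrow> real) \<Rightarrow> 'a \<Rightarrow> real" where
  "norm2_lap g = (\<lambda>x. (x \<bullet> x) * lap g x)"

lemma smooth_hom0_norm2_lap:
  assumes g: "smooth_hom0 g"
  shows "smooth_hom0 (norm2_lap g)"
proof -
  have open_nz: "open (- {0::'a})" by auto
  have "Ck k (- {0}) (norm2_lap g)" for k
  proof -
    have "Ck (Suc (Suc k)) (- {0}) g" using g unfolding smooth_hom0_def smooth_on_def by blast
    then have "Ck k (- {0}) (pd b (pd b g))" for b by (simp add: pd_def)
    then have "Ck k (- {0}) (lap g)"
      unfolding lap_def by (intro Ck_sum[OF open_nz]) auto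
    then show ?thesis unfolding norm2_lap_def by (intro Ck_mult[OF open_nz] Ck_inner_self[OF open_nz])
  qed
  moreover have "norm2_lap g (c *\<^sub>R x) = norm2_lap g x" if x: "x \<noteq> 0" and c: "0 < c" for x c
  proof -
    note d = twice_differentiable_onD[OF smooth_hom0_twice_differentiable[OF g]]
    have "pd b g (c *\<^sub>R y) = (1 / c) * pd b g y" if "y \<noteq> 0" for b y
      by (rule pd_scaleR_homogeneous[OF c that]) (use g c d in \<open>auto simp: smooth_hom0_scaleR\<close>)
    then have "pd b (pd b g) (c *\<^sub>R x) = ((1 / c) / c) * pd b (pd b g) x" for b
      by (intro pd_scaleR_homogeneous[OF c x]) (use d in auto)
    then have "lap g (c *\<^sub>R x) = ((1 / c) / c) * lap g x"
      unfolding lap_def by (simp add: sum_distrib_left)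
    then show ?thesis unfolding norm2_lap_def using c by (simp add: field_simps)
  qed
  ultimately show ?thesis unfolding smooth_hom0_def smooth_on_def by blast
qed

section \<open>The hyperbolic Laplacian of radial multiples\<close>

lemma twice_differentiable_on_subset:
  "twice_differentiable_on T u \<Longrightarrow> S \<subseteq> T \<Longrightarrow> twice_differentiable_on S u"
  unfolding twice_differentiable_on_def by blast

lemma pd_inner_right: "pd w (\<lambda>y. v \<bullet> y) x = v \<bullet> w"
  unfolding pd_def
  by (metis bounded_linear_imp_has_derivative bounded_linear_inner_right frechet_derivative_at)

lemma has_derivative_radial:
  assumes "x \<noteq> 0" "(\<Psi> has_real_derivative \<Psi>') (at (norm x))"
  shows "((\<lambda>y. \<Psi> (norm y)) has_derivative (\<lambda>h. \<Psi>' * (h \<bullet> x) / norm x)) (at x)"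
proof -
  have "(\<lambda>h. (h \<bullet> sgn x) * \<Psi>') = (\<lambda>h. \<Psi>' * (h \<bullet> x) / norm x)"
    by (simp add: sgn_div_norm divide_inverse ac_simps)
  then show ?thesis
    using DERIV_compose_FDERIV[OF assms(2) has_derivative_norm[OF assms(1)]] by simp
qed

lemma pd_radial:
  assumes "x \<noteq> 0" "(\<Psi> has_real_derivative \<Psi>') (at (norm x))"
  shows "pd v (\<lambda>y. \<Psi> (norm y)) x = \<Psi>' * (v \<bullet> x) / norm x"
  using frechet_derivative_at[OF has_derivative_radial[OF assms]] unfolding pd_def by metis

lemma has_derivative_radial_div:
  assumes "x \<noteq> 0" "(\<Psi>1 has_real_derivative \<Psi>2) (at (norm x))"
  shows "((\<lambda>y. \<Psi>1 (norm y) / norm y) has_derivative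
    (\<lambda>h. (\<Psi>2 * norm x - \<Psi>1 (norm x)) / (norm x)\<^sup>2 * (h \<bullet> x) / norm x)) (at x)"
proof -
  have "((\<lambda>r. \<Psi>1 r / r) has_real_derivative (\<Psi>2 * norm x - \<Psi>1 (norm x)) / (norm x)\<^sup>2) (at (norm x))"
    using assms by (auto intro!: derivative_eq_intros simp: power2_eq_square)
  then show ?thesis by (rule has_derivative_radial[OF assms(1)])
qed

lemma twice_differentiable_on_radial:
  fixes S :: "'a::euclidean_space set"
  assumes S: "open S" "0 \<notin> S"
    and d1: "\<And>x. x \<in> S \<Longrightarrow> (\<Psi> has_real_derivative \<Psi>1 (norm x)) (at (norm x))"
    and d2: "\<And>x. x \<in> S \<Longrightarrow> (\<Psi>1 has_real_derivative \<Psi>2 (norm x)) (at (norm x))"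
  shows "twice_differentiable_on S (\<lambda>y. \<Psi> (norm y))"
proof (rule twice_differentiable_onI[OF S(1), where g = "\<lambda>v y. \<Psi>1 (norm y) / norm y * (v \<bullet> y)"])
  fix x v assume x: "x \<in> S"
  then have nz: "x \<noteq> 0" using S(2) by blast
  show "(\<lambda>y. \<Psi> (norm y)) differentiable (at x)"
    using has_derivative_radial[OF nz d1[OF x]] unfolding differentiable_def by blast
  have "(\<lambda>y. \<Psi>1 (norm y) / norm y) differentiable (at x)"
    using has_derivative_radial_div[OF nz d2[OF x]] unfolding differentiable_def by blast
  then show "(\<lambda>y. \<Psi>1 (norm y) / norm y * (v \<bullet> y)) differentiable (at x)"
    by (rule differentiable_mult[OF _ bounded_linear_imp_differentiable[OF bounded_linear_inner_right]])
  show "pd v (\<lambda>y. \<Psi> (norm y)) x = \<Psi>1 (norm x) / norm x * (v \<bullet> x)"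
    unfolding pd_radial[OF nz d1[OF x]] by (simp add: inner_commute)
qed

lemma lap_radial:
  fixes S :: "'a::euclidean_space set"
  assumes S: "open S" "0 \<notin> S" and x: "x \<in> S"
    and d1: "\<And>x. x \<in> S \<Longrightarrow> (\<Psi> has_real_derivative \<Psi>1 (norm x)) (at (norm x))"
    and d2: "\<And>x. x \<in> S \<Longrightarrow> (\<Psi>1 has_real_derivative \<Psi>2 (norm x)) (at (norm x))"
  shows "lap (\<lambda>y. \<Psi> (norm y)) x = \<Psi>2 (norm x) + (real DIM('a) - 1) / norm x * \<Psi>1 (norm x)"
proof -
  define \<phi> where "\<phi> y = \<Psi>1 (norm y) / norm y" for y :: 'a
  define r where "r = norm x"
  define A where "A = (\<Psi>2 r * r - \<Psi>1 r) / r ^ 3"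
  have nz: "y \<noteq> 0" if "y \<in> S" for y using S(2) that by blast
  have r: "r > 0" unfolding r_def using nz[OF x] by simp
  note d\<phi> = has_derivative_radial_div[OF nz[OF x] d2[OF x], folded \<phi>_def]
  have "pd b (pd b (\<lambda>y. \<Psi> (norm y))) x = pd b (\<lambda>y. \<phi> y * (b \<bullet> y)) x" for b
    by (rule pd_cong_open[OF S(1) x])
       (simp add: \<phi>_def pd_radial[OF nz d1] inner_commute)
  also have "\<dots> b = pd b \<phi> x * (b \<bullet> x) + \<phi> x * (b \<bullet> b)" for b
  proof -
    have "\<phi> differentiable (at x)" using d\<phi> unfolding differentiable_def by blast
    from pd_mult[OF this bounded_linear_imp_differentiable[OF bounded_linear_inner_right]]
    show ?thesis by (simp add: pd_inner_right)
  qed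
  also have "\<dots> b = A * ((b \<bullet> x) * (b \<bullet> x)) + \<phi> x * (b \<bullet> b)" for b
    unfolding pd_def frechet_derivative_at[OF d\<phi>, symmetric] A_def using r
    by (simp add: r_def[symmetric] power2_eq_square power3_eq_cube field_simps)
  finally have "lap (\<lambda>y. \<Psi> (norm y)) x
      = A * (\<Sum>b\<in>Basis. (b \<bullet> x) * (b \<bullet> x)) + \<phi> x * (\<Sum>b\<in>(Basis::'a set). b \<bullet> b)"
    unfolding lap_def by (simp only: sum.distrib sum_distrib_left)
  also have "(\<Sum>b\<in>Basis. (b \<bullet> x) * (b \<bullet> x)) = r\<^sup>2"
    unfolding r_def power2_norm_eq_inner by (subst euclidean_inner[of x x]) (simp add: inner_commute)
  also have "A * r\<^sup>2 + \<phi> x * (\<Sum>b\<in>(Basis::'a set). b \<bullet> b) = A * r\<^sup>2 + \<Psi>1 r / r * real DIM('a)"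
    by (simp add: r_def \<phi>_def)
  also have "\<dots> = \<Psi>2 r + (real DIM('a) - 1) / r * \<Psi>1 r"
    using r by (simp add: A_def power2_eq_square power3_eq_cube field_simps)
  finally show ?thesis unfolding r_def .
qed

lemma lap_radial_mult:
  fixes g :: "'a::euclidean_space \<Rightarrow> real"
  assumes g: "smooth_hom0 g" and S: "open S" "0 \<notin> S" and x: "x \<in> S"
    and d1: "\<And>x. x \<in> S \<Longrightarrow> (\<Psi> has_real_derivative \<Psi>1 (norm x)) (at (norm x))"
    and d2: "\<And>x. x \<in> S \<Longrightarrow> (\<Psi>1 has_real_derivative \<Psi>2 (norm x)) (at (norm x))"
  shows "lap (\<lambda>y. \<Psi> (norm y) * g y) x
    = (\<Psi>2 (norm x) + (real DIM('a) - 1) / norm x * \<Psi>1 (norm x)) * g x + \<Psi> (norm x) * lap g x"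
proof -
  have gS: "twice_differentiable_on S g"
    using twice_differentiable_on_subset[OF smooth_hom0_twice_differentiable[OF g]] S(2) by blast
  have nz: "x \<noteq> 0" using x S(2) by blast
  have "(\<Sum>b\<in>Basis. pd b (\<lambda>y. \<Psi> (norm y)) x * pd b g x) = \<Psi>1 (norm x) / norm x * pd x g x"
    unfolding pd_radial[OF nz d1[OF x]] pd_euclidean[OF twice_differentiable_onD(1)[OF gS x], of x]
    by (simp add: sum_distrib_left inner_commute mult.assoc)
  also have "pd x g x = 0"
    by (rule pd_self_eq_0[OF twice_differentiable_onD(1)[OF gS x] smooth_hom0_scaleR[OF g nz]])
  finally show ?thesis
    using lap_mult[OF S(1) twice_differentiable_on_radial[OF S d1 d2] gS x] lap_radial[OF S x d1 d2]
    by simp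
qed

lemma
  fixes g :: "'a::euclidean_space \<Rightarrow> real" and \<Psi> \<Psi>1 \<Psi>2 :: "real \<Rightarrow> real"
  assumes g: "smooth_hom0 g" and S: "open S" "0 \<notin> S"
    and d1: "\<And>x. x \<in> S \<Longrightarrow> (\<Psi> has_real_derivative \<Psi>1 (norm x)) (at (norm x))"
    and d2: "\<And>x. x \<in> S \<Longrightarrow> (\<Psi>1 has_real_derivative \<Psi>2 (norm x)) (at (norm x))"
  shows twice_differentiable_on_radial_mult:
      "twice_differentiable_on S (\<lambda>y. \<Psi> (norm y) * g y)"
    and hyp_lap_radial_mult: "x \<in> S \<Longrightarrow> hyp_lap (\<lambda>y. \<Psi> (norm y) * g y) x =
      ((1 - (norm x)\<^sup>2)\<^sup>2 / 4 * (\<Psi>2 (norm x) + dimn TYPE('a) / norm x * \<Psi>1 (norm x))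
        + (dimn TYPE('a) - 1) * (1 - (norm x)\<^sup>2) / 2 * (norm x * \<Psi>1 (norm x))) * g x
      + (1 - (norm x)\<^sup>2)\<^sup>2 / (4 * (norm x)\<^sup>2) * \<Psi> (norm x) * norm2_lap g x"
proof -
  have gS: "twice_differentiable_on S g"
    using twice_differentiable_on_subset[OF smooth_hom0_twice_differentiable[OF g]] S(2) by blast
  note rS = twice_differentiable_on_radial[OF S d1 d2]
  show "twice_differentiable_on S (\<lambda>y. \<Psi> (norm y) * g y)"
    by (rule twice_differentiable_on_mult[OF S(1) rS gS])
  assume x: "x \<in> S"
  define r where "r = norm x"
  have nz: "x \<noteq> 0" using x S(2) by blast
  then have r: "r > 0" unfolding r_def by simp
  have lap: "lap (\<lambda>y. \<Psi> (norm y) * g y) x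
      = (\<Psi>2 r + dimn TYPE('a) / r * \<Psi>1 r) * g x + \<Psi> r * (norm2_lap g x / r\<^sup>2)"
    using lap_radial_mult[OF g S x d1 d2] r
    by (simp add: dimn_def norm2_lap_def r_def power2_norm_eq_inner)
  have "pd x g x = 0"
    by (rule pd_self_eq_0[OF twice_differentiable_onD(1)[OF gS x] smooth_hom0_scaleR[OF g nz]])
  then have pdx: "pd x (\<lambda>y. \<Psi> (norm y) * g y) x = r * \<Psi>1 r * g x"
    using pd_mult[OF twice_differentiable_onD(1)[OF rS x] twice_differentiable_onD(1)[OF gS x]] r
    unfolding pd_radial[OF nz d1[OF x]]
    by (simp add: r_def power2_norm_eq_inner[symmetric] power2_eq_square)
  show "hyp_lap (\<lambda>y. \<Psi> (norm y) * g y) x =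
      ((1 - (norm x)\<^sup>2)\<^sup>2 / 4 * (\<Psi>2 (norm x) + dimn TYPE('a) / norm x * \<Psi>1 (norm x))
        + (dimn TYPE('a) - 1) * (1 - (norm x)\<^sup>2) / 2 * (norm x * \<Psi>1 (norm x))) * g x
      + (1 - (norm x)\<^sup>2)\<^sup>2 / (4 * (norm x)\<^sup>2) * \<Psi> (norm x) * norm2_lap g x"
    unfolding hyp_lap_def r_def[symmetric] lap pdx using r by (simp add: field_simps)
qed

abbreviation punctured_ball :: "'a::real_normed_vector set" where
  "punctured_ball \<equiv> ball 0 1 - {0}"

lemma open_punctured_ball: "open punctured_ball"
  by (simp add: open_Diff)

definition rho_radius :: "real \<Rightarrow> real" where
  "rho_radius r = 2 * (1 - r) / (1 + r)"

lemma rho_eq_rho_radius: "rho x = rho_radius (norm x)"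
  unfolding rho_def rho_radius_def ..

lemma rho_radius_bounds: "0 < r \<Longrightarrow> r < 1 \<Longrightarrow> 0 < rho_radius r \<and> rho_radius r < 2"
  unfolding rho_radius_def by (simp add: field_simps)

lemma rho_pos: "x \<in> punctured_ball \<Longrightarrow> 0 < rho x"
  using rho_radius_bounds[of "norm x"] by (simp add: rho_eq_rho_radius)

lemma has_real_derivative_rho_radius:
  "r > -1 \<Longrightarrow> (rho_radius has_real_derivative -4 / (1 + r)\<^sup>2) (at r)"
  unfolding rho_radius_def[abs_def]
  by (auto intro!: derivative_eq_intros simp: field_simps power2_eq_square)

lemma tendsto_rho_radius: "(rho_radius \<longlongrightarrow> 0) (at_left 1)"
proof -
  have "isCont rho_radius 1" unfolding rho_radius_def[abs_def] by (auto intro!: continuous_intros)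
  then show ?thesis by (simp add: isCont_def filterlim_at_split rho_radius_def)
qed

lemma eventually_at_left_1: "eventually (\<lambda>r::real. 0 < r \<and> r < 1) (at_left 1)"
  using eventually_at_left_real[of 0 "1::real"] by simp

lemma scaleR_in_punctured_ball: "norm \<theta> = 1 \<Longrightarrow> 0 < r \<Longrightarrow> r < 1 \<Longrightarrow> r *\<^sub>R \<theta> \<in> punctured_ball"
  by auto

lemma rho_radius_radial_identity:
  fixes r n F1 F2 :: real
  assumes "0 < r" "r < 1"
  defines "p \<equiv> rho_radius r"
  shows "(1 - r\<^sup>2)\<^sup>2 / 4 * ((F2 * (16 / (1 + r) ^ 4) + F1 * (8 / (1 + r) ^ 3)) + n / r * (F1 * (-4 / (1 + r)\<^sup>2)))
       + (n - 1) * (1 - r\<^sup>2) / 2 * (r * (F1 * (-4 / (1 + r)\<^sup>2)))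
       = p\<^sup>2 * F2 + (1 - n) * p * F1 - 2 * n * p ^ 3 / (4 - p\<^sup>2) * F1"
proof -
  have "1 + r \<noteq> 0" using assms by simp
  have p2: "4 - p\<^sup>2 = 16 * r / (1 + r)\<^sup>2"
    unfolding p_def rho_radius_def power_divide using \<open>1 + r \<noteq> 0\<close>
    by (simp add: field_simps) (simp add: power2_eq_square algebra_simps)
  show ?thesis unfolding p2 unfolding p_def rho_radius_def using \<open>1 + r \<noteq> 0\<close> assms(1,2)
    by (simp add: divide_simps) algebra
qed

lemma rho_radius_weight_identity:
  fixes r :: real
  assumes "0 < r" "r < 1"
  defines "p \<equiv> rho_radius r"
  shows "(1 - r\<^sup>2)\<^sup>2 / (4 * r\<^sup>2) = 16 * p\<^sup>2 / (4 - p\<^sup>2)\<^sup>2"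
proof -
  have "1 + r \<noteq> 0" using assms by simp
  have p2: "4 - p\<^sup>2 = 16 * r / (1 + r)\<^sup>2"
    unfolding p_def rho_radius_def power_divide using \<open>1 + r \<noteq> 0\<close>
    by (simp add: field_simps) (simp add: power2_eq_square algebra_simps)
  show ?thesis unfolding p2 unfolding p_def rho_radius_def using \<open>1 + r \<noteq> 0\<close> assms(1,2)
    by (simp add: divide_simps) algebra
qed

lemma
  fixes g :: "'a::euclidean_space \<Rightarrow> real" and \<Phi> \<Phi>1 \<Phi>2 :: "real \<Rightarrow> real"
  assumes g: "smooth_hom0 g"
    and d1: "\<And>p. 0 < p \<Longrightarrow> p < 2 \<Longrightarrow> (\<Phi> has_real_derivative \<Phi>1 p) (at p)"
    and d2: "\<And>p. 0 < p \<Longrightarrow> p < 2 \<Longrightarrow> (\<Phi>1 has_real_derivative \<Phi>2 p) (at p)"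
  shows twice_differentiable_on_rho_mult:
      "twice_differentiable_on punctured_ball (\<lambda>y. \<Phi> (rho y) * g y)"
    and hyp_lap_rho_mult: "x \<in> punctured_ball \<Longrightarrow> hyp_lap (\<lambda>y. \<Phi> (rho y) * g y) x =
      ((rho x)\<^sup>2 * \<Phi>2 (rho x) + (1 - dimn TYPE('a)) * rho x * \<Phi>1 (rho x)
        - 2 * dimn TYPE('a) * rho x ^ 3 / (4 - (rho x)\<^sup>2) * \<Phi>1 (rho x)) * g x
      + 16 * (rho x)\<^sup>2 / (4 - (rho x)\<^sup>2)\<^sup>2 * \<Phi> (rho x) * norm2_lap g x"
proof -
  define \<Psi>1 where "\<Psi>1 r = \<Phi>1 (rho_radius r) * (-4 / (1 + r)\<^sup>2)" for r
  define \<Psi>2 where "\<Psi>2 r = \<Phi>2 (rho_radius r) * (16 / (1 + r) ^ 4) + \<Phi>1 (rho_radius r) * (8 / (1 + r) ^ 3)"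
    for r
  have S: "open (punctured_ball :: 'a set)" "0 \<notin> (punctured_ball :: 'a set)"
    using open_punctured_ball by auto
  have D1: "((\<lambda>r. \<Phi> (rho_radius r)) has_real_derivative \<Psi>1 r) (at r)" if "0 < r" "r < 1" for r
    unfolding \<Psi>1_def using rho_radius_bounds[OF that] that
    by (intro DERIV_chain2[OF d1 has_real_derivative_rho_radius]) auto
  have D2: "(\<Psi>1 has_real_derivative \<Psi>2 r) (at r)" if "0 < r" "r < 1" for r
  proof -
    have "((\<lambda>r. \<Phi>1 (rho_radius r)) has_real_derivative \<Phi>2 (rho_radius r) * (-4 / (1 + r)\<^sup>2)) (at r)"
      using rho_radius_bounds[OF that] that
      by (intro DERIV_chain2[OF d2 has_real_derivative_rho_radius]) auto
    moreover have "((\<lambda>r. -4 / (1 + r)\<^sup>2) has_real_derivative 8 / (1 + r) ^ 3) (at r)"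
      using that by (auto intro!: derivative_eq_intros simp: divide_simps) algebra
    ultimately show ?thesis
      unfolding \<Psi>1_def[abs_def] \<Psi>2_def by (rule DERIV_mult[THEN DERIV_cong]) (simp add: algebra_simps)
  qed
  have r: "0 < norm x" "norm x < 1" if "x \<in> punctured_ball" for x :: 'a
    using that by auto
  have D1': "((\<lambda>r. \<Phi> (rho_radius r)) has_real_derivative \<Psi>1 (norm x)) (at (norm x))"
    and D2': "(\<Psi>1 has_real_derivative \<Psi>2 (norm x)) (at (norm x))"
    if "x \<in> punctured_ball" for x :: 'a
    using D1 D2 r[OF that] by auto
  have eq: "(\<lambda>y. \<Phi> (rho y) * g y) = (\<lambda>y. (\<lambda>r. \<Phi> (rho_radius r)) (norm y) * g y)"
    by (simp add: rho_eq_rho_radius)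
  show "twice_differentiable_on punctured_ball (\<lambda>y. \<Phi> (rho y) * g y)"
    unfolding eq by (rule twice_differentiable_on_radial_mult[OF g S D1' D2'])
  assume x: "x \<in> punctured_ball"
  note H = hyp_lap_radial_mult[OF g S D1' D2' x, unfolded \<Psi>1_def \<Psi>2_def
      rho_radius_radial_identity[OF r[OF x]] rho_radius_weight_identity[OF r[OF x]]]
  show "hyp_lap (\<lambda>y. \<Phi> (rho y) * g y) x =
      ((rho x)\<^sup>2 * \<Phi>2 (rho x) + (1 - dimn TYPE('a)) * rho x * \<Phi>1 (rho x)
        - 2 * dimn TYPE('a) * rho x ^ 3 / (4 - (rho x)\<^sup>2) * \<Phi>1 (rho x)) * g x
      + 16 * (rho x)\<^sup>2 / (4 - (rho x)\<^sup>2)\<^sup>2 * \<Phi> (rho x) * norm2_lap g x"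
    using H by (simp add: rho_eq_rho_radius)
qed

section \<open>Expansions in even powers of \<open>\<rho>\<close>\<close>

text \<open>Coefficients are functions of \<open>s = \<rho>\<^sup>2\<close> in the algebra generated by \<open>s\<close> and
  \<open>1 / (4 - s)\<close>. The denominator appears when \<open>1 / |x|\<close> is written in \<open>\<rho>\<close>, since
  \<open>4 - \<rho>\<^sup>2 = 16 |x| / (1 + |x|)\<^sup>2\<close>; the algebra is closed under differentiation on \<open>s < 4\<close>.\<close>

inductive rho_coeff :: "(real \<Rightarrow> real) \<Rightarrow> bool" where
  rho_coeff_const: "rho_coeff (\<lambda>s. c)"
| rho_coeff_id: "rho_coeff (\<lambda>s. s)"
| rho_coeff_inverse: "rho_coeff (\<lambda>s. 1 / (4 - s))"
| rho_coeff_add: "rho_coeff p \<Longrightarrow> rho_coeff q \<Longrightarrow> rho_coeff (\<lambda>s. p s + q s)"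
| rho_coeff_mult: "rho_coeff p \<Longrightarrow> rho_coeff q \<Longrightarrow> rho_coeff (\<lambda>s. p s * q s)"

lemma rho_coeff_has_derivative:
  "rho_coeff Q \<Longrightarrow> \<exists>Q'. rho_coeff Q' \<and> (\<forall>s<4. (Q has_real_derivative Q' s) (at s))"
proof (induction rule: rho_coeff.induct)
  case (rho_coeff_const c)
  then show ?case by (intro exI[of _ "\<lambda>s. 0"]) (auto intro: rho_coeff.intros)
next
  case rho_coeff_id
  then show ?case by (intro exI[of _ "\<lambda>s. 1"]) (auto intro: rho_coeff.intros)
next
  case rho_coeff_inverse
  show ?case
  proof (intro exI[of _ "\<lambda>s. 1 / (4 - s) * (1 / (4 - s))"] conjI allI impI)
    show "rho_coeff (\<lambda>s. 1 / (4 - s) * (1 / (4 - s)))" by (intro rho_coeff.intros)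
    show "((\<lambda>s. 1 / (4 - s)) has_real_derivative 1 / (4 - s) * (1 / (4 - s))) (at s)"
      if "s < 4" for s :: real
      using that by (auto intro!: derivative_eq_intros simp: power2_eq_square)
  qed
next
  case (rho_coeff_add p q)
  then obtain p' q' where "rho_coeff p'" "rho_coeff q'"
    "\<forall>s<4. (p has_real_derivative p' s) (at s)" "\<forall>s<4. (q has_real_derivative q' s) (at s)"
    by blast
  then show ?case
    by (intro exI[of _ "\<lambda>s. p' s + q' s"]) (auto intro!: rho_coeff.intros derivative_eq_intros)
next
  case (rho_coeff_mult p q)
  then obtain p' q' where "rho_coeff p'" "rho_coeff q'"
    "\<forall>s<4. (p has_real_derivative p' s) (at s)" "\<forall>s<4. (q has_real_derivative q' s) (at s)"
    by blast
  with rho_coeff_mult.hyps show ?case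
    by (intro exI[of _ "\<lambda>s. p' s * q s + p s * q' s"])
       (auto intro!: rho_coeff.intros derivative_eq_intros)
qed

lemma rho_coeff_isCont: "rho_coeff Q \<Longrightarrow> s < 4 \<Longrightarrow> isCont Q s"
  using rho_coeff_has_derivative DERIV_isCont by blast

lemma has_real_derivative_powr_mult_square:
  assumes "0 < p" "(Q has_real_derivative Q1) (at (p\<^sup>2))"
  shows "((\<lambda>p. p powr c * Q (p\<^sup>2)) has_real_derivative
      c * p powr (c - 1) * Q (p\<^sup>2) + 2 * p powr (c + 1) * Q1) (at p)"
proof -
  have "((\<lambda>p. p powr c * Q (p\<^sup>2)) has_real_derivative
      c * p powr (c - 1) * Q (p\<^sup>2) + p powr c * (Q1 * (2 * p))) (at p)"
    using assms by (auto intro!: derivative_eq_intros DERIV_chain2[of Q _ "\<lambda>p. p\<^sup>2", OF assms(2)])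
  moreover have "p powr c * (Q1 * (2 * p)) = 2 * p powr (c + 1) * Q1"
    using assms(1) by (simp add: powr_add)
  ultimately show ?thesis by simp
qed

lemma has_real_derivative_powr_coeff:
  fixes Q Q1 Q2 :: "real \<Rightarrow> real"
  assumes Q1: "\<And>s. s < 4 \<Longrightarrow> (Q has_real_derivative Q1 s) (at s)"
    and Q2: "\<And>s. s < 4 \<Longrightarrow> (Q1 has_real_derivative Q2 s) (at s)"
    and p: "0 < p" "p < 2"
  shows "((\<lambda>p. p powr b * Q (p\<^sup>2)) has_real_derivative
      b * (p powr (b - 1) * Q (p\<^sup>2)) + 2 * (p powr (b + 1) * Q1 (p\<^sup>2))) (at p)"
    and "((\<lambda>p. b * (p powr (b - 1) * Q (p\<^sup>2)) + 2 * (p powr (b + 1) * Q1 (p\<^sup>2))) has_real_derivative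
      b * ((b - 1) * p powr (b - 2) * Q (p\<^sup>2) + 2 * p powr b * Q1 (p\<^sup>2))
      + 2 * ((b + 1) * p powr b * Q1 (p\<^sup>2) + 2 * p powr (b + 2) * Q2 (p\<^sup>2))) (at p)"
proof -
  have sq: "p\<^sup>2 < 4" using power_strict_mono[of p 2 2] p by simp
  show "((\<lambda>p. p powr b * Q (p\<^sup>2)) has_real_derivative
      b * (p powr (b - 1) * Q (p\<^sup>2)) + 2 * (p powr (b + 1) * Q1 (p\<^sup>2))) (at p)"
    using has_real_derivative_powr_mult_square[of p Q "Q1 (p\<^sup>2)" b] p sq Q1 by (simp add: mult.assoc)
  have "((\<lambda>p. p powr (b - 1) * Q (p\<^sup>2)) has_real_derivative
      (b - 1) * p powr (b - 2) * Q (p\<^sup>2) + 2 * p powr b * Q1 (p\<^sup>2)) (at p)"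
    using has_real_derivative_powr_mult_square[of p Q "Q1 (p\<^sup>2)" "b - 1"] p sq Q1
    by (simp add: diff_diff_eq)
  moreover have "((\<lambda>p. p powr (b + 1) * Q1 (p\<^sup>2)) has_real_derivative
      (b + 1) * p powr b * Q1 (p\<^sup>2) + 2 * p powr (b + 2) * Q2 (p\<^sup>2)) (at p)"
    using has_real_derivative_powr_mult_square[of p Q1 "Q2 (p\<^sup>2)" "b + 1"] p sq Q2
    by (simp add: add.assoc)
  ultimately show "((\<lambda>p. b * (p powr (b - 1) * Q (p\<^sup>2)) + 2 * (p powr (b + 1) * Q1 (p\<^sup>2)))
    has_real_derivative b * ((b - 1) * p powr (b - 2) * Q (p\<^sup>2) + 2 * p powr b * Q1 (p\<^sup>2))
      + 2 * ((b + 1) * p powr b * Q1 (p\<^sup>2) + 2 * p powr (b + 2) * Q2 (p\<^sup>2))) (at p)"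
    by (intro DERIV_add DERIV_cmult)
qed

lemma twice_differentiable_on_rho_powr_coeff:
  assumes "rho_coeff Q" "smooth_hom0 g"
  shows "twice_differentiable_on punctured_ball (\<lambda>y. rho y powr b * Q ((rho y)\<^sup>2) * g y)"
proof -
  obtain Q1 where Q1: "rho_coeff Q1" "\<And>s. s < 4 \<Longrightarrow> (Q has_real_derivative Q1 s) (at s)"
    using rho_coeff_has_derivative[OF assms(1)] by blast
  obtain Q2 where "\<And>s. s < 4 \<Longrightarrow> (Q1 has_real_derivative Q2 s) (at s)"
    using rho_coeff_has_derivative[OF Q1(1)] by blast
  from twice_differentiable_on_rho_mult[OF assms(2)
      has_real_derivative_powr_coeff(1)[OF Q1(2) this] has_real_derivative_powr_coeff(2)[OF Q1(2) this]]
  show ?thesis by simp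
qed

lemma Dop_rho_powr_coeff:
  fixes g :: "'a::euclidean_space \<Rightarrow> real"
  assumes Q: "rho_coeff Q" and g: "smooth_hom0 g"
  shows "\<exists>R W. rho_coeff R \<and> rho_coeff W \<and> (\<forall>x\<in>punctured_ball.
      Dop t (\<lambda>y. rho y powr b * Q ((rho y)\<^sup>2) * g y) x
        - (b - t) * (dimn TYPE('a) - b - t) * (rho x powr b * Q ((rho x)\<^sup>2) * g x)
      = rho x powr (b + 2) * R ((rho x)\<^sup>2) * g x + rho x powr (b + 2) * W ((rho x)\<^sup>2) * norm2_lap g x)"
proof -
  obtain Q1 where Q1: "rho_coeff Q1" "\<And>s. s < 4 \<Longrightarrow> (Q has_real_derivative Q1 s) (at s)"
    using rho_coeff_has_derivative[OF Q] by blast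
  obtain Q2 where Q2: "rho_coeff Q2" "\<And>s. s < 4 \<Longrightarrow> (Q1 has_real_derivative Q2 s) (at s)"
    using rho_coeff_has_derivative[OF Q1(1)] by blast
  define n where "n = dimn TYPE('a)"
  define \<Phi>1 where "\<Phi>1 p = b * (p powr (b - 1) * Q (p\<^sup>2)) + 2 * (p powr (b + 1) * Q1 (p\<^sup>2))" for p
  define \<Phi>2 where "\<Phi>2 p = b * ((b - 1) * p powr (b - 2) * Q (p\<^sup>2) + 2 * p powr b * Q1 (p\<^sup>2))
      + 2 * ((b + 1) * p powr b * Q1 (p\<^sup>2) + 2 * p powr (b + 2) * Q2 (p\<^sup>2))" for p
  have d1: "((\<lambda>p. p powr b * Q (p\<^sup>2)) has_real_derivative \<Phi>1 p) (at p)"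
    and d2: "(\<Phi>1 has_real_derivative \<Phi>2 p) (at p)" if "0 < p" "p < 2" for p
    unfolding \<Phi>1_def[abs_def] \<Phi>2_def using has_real_derivative_powr_coeff[OF Q1(2) Q2(2) that] by blast+
  define R where "R s = (2 * n - 4 * b - 4) * Q1 s + (- 4) * (s * Q2 s)
      + (2 * n) * ((b * Q s + 2 * (s * Q1 s)) * (1 / (4 - s)))" for s
  define W where "W s = (- 16) * (Q s * (1 / (4 - s) * (1 / (4 - s))))" for s
  have "rho_coeff R" unfolding R_def[abs_def] by (intro rho_coeff.intros Q Q1(1) Q2(1))
  moreover have "rho_coeff W" unfolding W_def[abs_def] by (intro rho_coeff.intros Q)
  moreover have "Dop t (\<lambda>y. rho y powr b * Q ((rho y)\<^sup>2) * g y) x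
        - (b - t) * (dimn TYPE('a) - b - t) * (rho x powr b * Q ((rho x)\<^sup>2) * g x)
      = rho x powr (b + 2) * R ((rho x)\<^sup>2) * g x + rho x powr (b + 2) * W ((rho x)\<^sup>2) * norm2_lap g x"
    if x: "x \<in> punctured_ball" for x :: 'a
  proof -
    define p where "p = rho x"
    define P where "P = p powr b"
    have p: "0 < p" "p < 2" "4 - p\<^sup>2 \<noteq> 0"
      using rho_radius_bounds[of "norm x"] x power_strict_mono[of p 2 2]
      by (auto simp: p_def rho_eq_rho_radius)
    have Pe: "p powr (b - 1) = P / p" "p powr (b - 2) = P / p\<^sup>2"
      "p powr (b + 1) = P * p" "p powr (b + 2) = P * p\<^sup>2"
      unfolding P_def using p(1) by (simp_all add: powr_diff powr_add power2_eq_square)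
    have H: "hyp_lap (\<lambda>y. rho y powr b * Q ((rho y)\<^sup>2) * g y) x =
        (p\<^sup>2 * \<Phi>2 p + (1 - n) * p * \<Phi>1 p - 2 * n * p ^ 3 / (4 - p\<^sup>2) * \<Phi>1 p) * g x
        + 16 * p\<^sup>2 / (4 - p\<^sup>2)\<^sup>2 * (P * Q (p\<^sup>2)) * norm2_lap g x"
      using hyp_lap_rho_mult[OF g d1 d2 x] unfolding p_def n_def P_def by simp
    have I: "p\<^sup>2 * \<Phi>2 p + (1 - n) * p * \<Phi>1 p - 2 * n * p ^ 3 / (4 - p\<^sup>2) * \<Phi>1 p
        = P * (b * (b - n) * Q (p\<^sup>2) - p\<^sup>2 * R (p\<^sup>2))"
      unfolding \<Phi>1_def \<Phi>2_def R_def Pe P_def[symmetric] using p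
      by (simp add: field_simps power2_eq_square power3_eq_cube)
    show ?thesis
      unfolding Dop_def H I p_def[symmetric] P_def[symmetric] n_def[symmetric] Pe W_def using p(3)
      by (simp add: field_simps power2_eq_square)
  qed
  ultimately show ?thesis by blast
qed

inductive rho_expansion :: "real \<Rightarrow> ('a::euclidean_space \<Rightarrow> real) \<Rightarrow> bool" for b :: real where
  rho_expansion_term:
    "rho_coeff Q \<Longrightarrow> smooth_hom0 g \<Longrightarrow> rho_expansion b (\<lambda>y. rho y powr b * Q ((rho y)\<^sup>2) * g y)"
| rho_expansion_add: "rho_expansion b u \<Longrightarrow> rho_expansion b v \<Longrightarrow> rho_expansion b (\<lambda>y. u y + v y)"
| rho_expansion_cong:
    "rho_expansion b u \<Longrightarrow> (\<And>x. x \<in> punctured_ball \<Longrightarrow> u x = v x) \<Longrightarrow> rho_expansion b v"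

lemma twice_differentiable_on_rho_expansion:
  "rho_expansion b u \<Longrightarrow> twice_differentiable_on punctured_ball u"
proof (induction rule: rho_expansion.induct)
  case (rho_expansion_term Q g)
  then show ?case by (rule twice_differentiable_on_rho_powr_coeff)
next
  case (rho_expansion_add u v)
  then show ?case
    using twice_differentiable_on_lincomb[OF open_punctured_ball, of u v 1 1] by simp
next
  case (rho_expansion_cong u v)
  then show ?case using twice_differentiable_on_cong[OF open_punctured_ball] by blast
qed

lemma rho_expansion_scale: "rho_expansion b u \<Longrightarrow> rho_expansion b (\<lambda>x. c * u x)"
proof (induction rule: rho_expansion.induct)
  case (rho_expansion_term Q g)
  have "rho_coeff (\<lambda>s. c * Q s)" by (intro rho_coeff.intros rho_expansion_term(1))
  from rho_expansion.rho_expansion_term[OF this rho_expansion_term(2)] show ?case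
    by (simp add: ac_simps)
next
  case (rho_expansion_add u v)
  from rho_expansion.rho_expansion_add[OF rho_expansion_add.IH] show ?case
    by (simp add: distrib_left)
next
  case (rho_expansion_cong u v)
  show ?case
    by (rule rho_expansion.rho_expansion_cong[OF rho_expansion_cong.IH]) (simp add: rho_expansion_cong(2))
qed

lemma rho_expansion_powr_mult:
  "rho_expansion b u \<Longrightarrow> rho_expansion (c + b) (\<lambda>x. rho x powr c * u x)"
proof (induction rule: rho_expansion.induct)
  case (rho_expansion_term Q g)
  show ?case
  proof (rule rho_expansion_cong[OF rho_expansion.rho_expansion_term[OF rho_expansion_term]])
    show "rho x powr (c + b) * Q ((rho x)\<^sup>2) * g x = rho x powr c * (rho x powr b * Q ((rho x)\<^sup>2) * g x)"
      if "x \<in> punctured_ball" for x :: 'a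
      using rho_pos[OF that] by (simp add: powr_add)
  qed
next
  case (rho_expansion_add u v)
  from rho_expansion.rho_expansion_add[OF rho_expansion_add.IH] show ?case
    by (simp add: distrib_left)
next
  case (rho_expansion_cong u v)
  show ?case
    by (rule rho_expansion.rho_expansion_cong[OF rho_expansion_cong.IH]) (simp add: rho_expansion_cong(2))
qed

lemma rho_expansion_weaken2: "rho_expansion (b + 2) u \<Longrightarrow> rho_expansion b u"
proof (induction rule: rho_expansion.induct)
  case (rho_expansion_term Q g)
  show ?case
  proof (rule rho_expansion_cong[OF rho_expansion.rho_expansion_term])
    show "rho_coeff (\<lambda>s. s * Q s)" by (intro rho_coeff.intros rho_expansion_term)
    show "rho x powr b * ((rho x)\<^sup>2 * Q ((rho x)\<^sup>2)) * g x = rho x powr (b + 2) * Q ((rho x)\<^sup>2) * g x"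
      if "x \<in> punctured_ball" for x :: 'a
      using rho_pos[OF that] by (simp add: powr_add power2_eq_square)
  qed (rule rho_expansion_term)
next
  case (rho_expansion_add u v)
  show ?case by (rule rho_expansion.rho_expansion_add[OF rho_expansion_add.IH])
next
  case (rho_expansion_cong u v)
  show ?case by (rule rho_expansion.rho_expansion_cong[OF rho_expansion_cong.IH rho_expansion_cong(2)])
qed

lemma rho_expansion_weaken: "rho_expansion (b + 2 * real m) u \<Longrightarrow> rho_expansion b u"
proof (induction m arbitrary: b)
  case 0
  then show ?case by simp
next
  case (Suc m)
  then have "rho_expansion ((b + 2) + 2 * real m) u" by (simp add: algebra_simps)
  then show ?case by (rule rho_expansion_weaken2[OF Suc.IH])
qed

lemma rho_expansion_rho_powr: "smooth_hom0 g \<Longrightarrow> rho_expansion a (\<lambda>x. rho x powr a * g x)"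
  using rho_expansion_term[OF rho_coeff_const[of 1], of g a] by simp

text \<open>\<open>(b - t) * (n - b - t)\<close> is the indicial polynomial of \<open>D\<^sub>t\<close> at \<open>\<rho>\<^sup>b\<close>; its roots
  \<open>b = t\<close> and \<open>b = n - t\<close> are used by the two chain lemmas below.\<close>

lemma rho_expansion_Dop_sub:
  fixes u :: "'a::euclidean_space \<Rightarrow> real"
  shows "rho_expansion b u \<Longrightarrow>
    rho_expansion (b + 2) (\<lambda>x. Dop t u x - (b - t) * (dimn TYPE('a) - b - t) * u x)"
proof (induction rule: rho_expansion.induct)
  case (rho_expansion_term Q g)
  obtain R W where RW: "rho_coeff R" "rho_coeff W"
    and eq: "\<And>x. x \<in> punctured_ball \<Longrightarrow>
      Dop t (\<lambda>y. rho y powr b * Q ((rho y)\<^sup>2) * g y) x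
        - (b - t) * (dimn TYPE('a) - b - t) * (rho x powr b * Q ((rho x)\<^sup>2) * g x)
      = rho x powr (b + 2) * R ((rho x)\<^sup>2) * g x + rho x powr (b + 2) * W ((rho x)\<^sup>2) * norm2_lap g x"
    using Dop_rho_powr_coeff[OF rho_expansion_term, of t b] by blast
  note terms = rho_expansion.rho_expansion_term[OF RW(1) rho_expansion_term(2)]
    rho_expansion.rho_expansion_term[OF RW(2) smooth_hom0_norm2_lap[OF rho_expansion_term(2)]]
  show ?case
  proof (rule rho_expansion_cong[OF rho_expansion_add[OF terms]])
    fix x :: 'a assume x: "x \<in> punctured_ball"
    show "rho x powr (b + 2) * R ((rho x)\<^sup>2) * g x + rho x powr (b + 2) * W ((rho x)\<^sup>2) * norm2_lap g x
      = Dop t (\<lambda>y. rho y powr b * Q ((rho y)\<^sup>2) * g y) x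
        - (b - t) * (dimn TYPE('a) - b - t) * (rho x powr b * Q ((rho x)\<^sup>2) * g x)"
      using eq[OF x] by simp
  qed
next
  case (rho_expansion_add u v)
  note tw = twice_differentiable_on_rho_expansion[OF rho_expansion_add(1)]
    twice_differentiable_on_rho_expansion[OF rho_expansion_add(2)]
  show ?case
  proof (rule rho_expansion_cong[OF rho_expansion.rho_expansion_add[OF rho_expansion_add.IH]])
    fix x :: 'a assume "x \<in> punctured_ball"
    with Dop_lincomb[OF open_punctured_ball tw, of x t 1 1]
    show "Dop t u x - (b - t) * (dimn TYPE('a) - b - t) * u x
        + (Dop t v x - (b - t) * (dimn TYPE('a) - b - t) * v x)
      = Dop t (\<lambda>y. u y + v y) x - (b - t) * (dimn TYPE('a) - b - t) * (u x + v x)"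
      by (simp add: algebra_simps)
  qed
next
  case (rho_expansion_cong u v)
  show ?case
  proof (rule rho_expansion.rho_expansion_cong[OF rho_expansion_cong.IH])
    fix x :: 'a assume x: "x \<in> punctured_ball"
    show "Dop t u x - (b - t) * (dimn TYPE('a) - b - t) * u x
      = Dop t v x - (b - t) * (dimn TYPE('a) - b - t) * v x"
      using Dop_cong_open[OF open_punctured_ball x rho_expansion_cong(2)] rho_expansion_cong(2)[OF x]
      by simp
  qed
qed

lemma rho_expansion_Dop:
  assumes "rho_expansion b u"
  shows "rho_expansion b (Dop t u)"
proof -
  let ?K = "(b - t) * (dimn TYPE('a) - b - t)"
  have "rho_expansion b (\<lambda>x. (Dop t u x - ?K * u x) + ?K * u x)"
    using rho_expansion_weaken2[OF rho_expansion_Dop_sub[OF assms]] rho_expansion_scale[OF assms]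
    by (rule rho_expansion_add)
  then show ?thesis by simp
qed

lemma rho_expansion_Dop_root:
  fixes u :: "'a::euclidean_space \<Rightarrow> real"
  assumes "rho_expansion b u" "(b - t) * (dimn TYPE('a) - b - t) = 0"
  shows "rho_expansion (b + 2) (Dop t u)"
  using rho_expansion_Dop_sub[OF assms(1), of t] assms(2) by simp

lemma Ds_append: "Ds (xs @ ys) u = Ds xs (Ds ys u)"
  by (simp add: Ds_def)

lemma rho_expansion_Ds: "rho_expansion b u \<Longrightarrow> rho_expansion b (Ds ts u)"
  by (induction ts) (auto simp: Ds_def intro: rho_expansion_Dop)

lemma rho_expansion_hyp_lap:
  assumes "rho_expansion b u"
  shows "rho_expansion b (hyp_lap u)"
  by (rule rho_expansion_cong[OF rho_expansion_scale[OF rho_expansion_Dop[OF assms], of "-1" 0]])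
     (simp add: Dop_def)

lemma Dop_commute_rho_expansion:
  assumes "rho_expansion b u" "x \<in> punctured_ball"
  shows "Dop t (Dop t' u) x = Dop t' (Dop t u) x"
  using Dop_commute[OF open_punctured_ball twice_differentiable_on_rho_expansion[OF assms(1)]
      twice_differentiable_on_rho_expansion[OF rho_expansion_hyp_lap[OF assms(1)]] assms(2)] .

lemma Ds_Dop_commute:
  assumes "rho_expansion b u"
  shows "x \<in> punctured_ball \<Longrightarrow> Ds ts (Dop t u) x = Dop t (Ds ts u) x"
proof (induction ts arbitrary: x)
  case Nil
  then show ?case by (simp add: Ds_def)
next
  case (Cons t1 ts)
  have "Ds (t1 # ts) (Dop t u) x = Dop t1 (Ds ts (Dop t u)) x" by (simp add: Ds_def)
  also have "\<dots> = Dop t1 (Dop t (Ds ts u)) x"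
    by (rule Dop_cong_open[OF open_punctured_ball Cons.prems Cons.IH])
  also have "\<dots> = Dop t (Dop t1 (Ds ts u)) x"
    by (rule Dop_commute_rho_expansion[OF rho_expansion_Ds[OF assms] Cons.prems])
  also have "\<dots> = Dop t (Ds (t1 # ts) u) x" by (simp add: Ds_def)
  finally show ?case .
qed

lemma Ds_rev_rho_expansion:
  "rho_expansion b u \<Longrightarrow> x \<in> punctured_ball \<Longrightarrow> Ds (rev ts) u x = Ds ts u x"
proof (induction ts arbitrary: u x)
  case Nil
  then show ?case by simp
next
  case (Cons t ts)
  have "Ds (rev (t # ts)) u x = Ds (rev ts) (Dop t u) x" by (simp add: Ds_def)
  also have "\<dots> = Ds ts (Dop t u) x" by (rule Cons.IH[OF rho_expansion_Dop[OF Cons.prems(1)] Cons.prems(2)])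
  also have "\<dots> = Dop t (Ds ts u) x" by (rule Ds_Dop_commute[OF Cons.prems])
  also have "\<dots> = Ds (t # ts) u x" by (simp add: Ds_def)
  finally show ?case .
qed

lemma rho_expansion_Ds_first_root:
  assumes "rho_expansion (c - 2 * real N) w"
  shows "k \<le> N + 1 \<Longrightarrow> rho_expansion (c - 2 * real N + 2 * real k)
    (Ds (map (\<lambda>l. c - 2 * real l) [N + 1 - k..<N + 1]) w)"
proof (induction k)
  case 0
  then show ?case using assms by (simp add: Ds_def)
next
  case (Suc k)
  then have k: "k \<le> N + 1" "k \<le> N" by simp_all
  then have "[N + 1 - Suc k..<N + 1] = (N - k) # [N + 1 - k..<N + 1]"
    using upt_conv_Cons[of "N - k" "N + 1"] by (simp add: Suc_diff_le del: upt_Suc)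
  moreover from k have "rho_expansion (c - 2 * real N + 2 * real k + 2)
      (Dop (c - 2 * real (N - k)) (Ds (map (\<lambda>l. c - 2 * real l) [N + 1 - k..<N + 1]) w))"
    by (intro rho_expansion_Dop_root[OF Suc.IH]) simp_all
  ultimately show ?case by (simp add: Ds_def algebra_simps)
qed

lemma rho_expansion_Ds_second_root:
  fixes w :: "'a::euclidean_space \<Rightarrow> real"
  assumes "rho_expansion (dimn TYPE('a) - c) w"
  shows "rho_expansion (dimn TYPE('a) - c + 2 * real k)
    (Ds (map (\<lambda>l. c - 2 * real l) (rev [0..<k])) w)"
proof (induction k)
  case 0
  then show ?case using assms by (simp add: Ds_def)
next
  case (Suc k)
  have "rho_expansion (dimn TYPE('a) - c + 2 * real k + 2)
      (Dop (c - 2 * real k) (Ds (map (\<lambda>l. c - 2 * real l) (rev [0..<k])) w))"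
    by (rule rho_expansion_Dop_root[OF Suc.IH]) simp
  then show ?case by (simp add: Ds_def algebra_simps)
qed

lemma tendsto_rho_expansion_ray:
  assumes "rho_expansion b u" "0 < b" "norm \<theta> = 1"
  shows "((\<lambda>r. u (r *\<^sub>R \<theta>)) \<longlongrightarrow> 0) (at_left 1)"
  using assms(1)
proof (induction rule: rho_expansion.induct)
  case (rho_expansion_term Q g)
  have E: "\<forall>\<^sub>F r in at_left 1. rho_radius r powr b * Q ((rho_radius r)\<^sup>2) * g \<theta>
      = rho (r *\<^sub>R \<theta>) powr b * Q ((rho (r *\<^sub>R \<theta>))\<^sup>2) * g (r *\<^sub>R \<theta>)"
    using eventually_at_left_1
  proof eventually_elim
    case (elim r)
    moreover have "\<theta> \<noteq> 0" using assms(3) by auto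
    ultimately show ?case
      using smooth_hom0_scaleR[OF rho_expansion_term(2), of \<theta> r] assms(3)
      by (simp add: rho_eq_rho_radius)
  qed
  have "((\<lambda>r. rho_radius r powr b) \<longlongrightarrow> 0) (at_left 1)"
    using eventually_at_left_1
    by (intro tendsto_zero_powrI[OF tendsto_rho_radius tendsto_const _ assms(2)])
       (auto elim!: eventually_mono dest: rho_radius_bounds)
  moreover have "((\<lambda>r. Q ((rho_radius r)\<^sup>2)) \<longlongrightarrow> Q (0\<^sup>2)) (at_left 1)"
    using rho_coeff_isCont[OF rho_expansion_term(1), of "0\<^sup>2"]
    by (intro isCont_tendsto_compose[of _ Q] tendsto_intros tendsto_rho_radius) simp
  ultimately have "((\<lambda>r. rho_radius r powr b * Q ((rho_radius r)\<^sup>2) * g \<theta>)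
      \<longlongrightarrow> 0 * Q (0\<^sup>2) * g \<theta>) (at_left 1)"
    by (intro tendsto_mult tendsto_const)
  then show ?case using tendsto_cong[OF E] by simp
next
  case (rho_expansion_add u v)
  from tendsto_add[OF rho_expansion_add.IH] show ?case by simp
next
  case (rho_expansion_cong u v)
  have "\<forall>\<^sub>F r in at_left 1. u (r *\<^sub>R \<theta>) = v (r *\<^sub>R \<theta>)"
    using eventually_at_left_1
  proof eventually_elim
    case (elim r)
    then show ?case by (intro rho_expansion_cong(2) scaleR_in_punctured_ball[OF assms(3)]) simp_all
  qed
  with rho_expansion_cong(3) show ?case by (simp add: tendsto_cong)
qed

section \<open>The boundary operators\<close>

lemma fracg_less_1: "fracg \<gamma> < 1"
  unfolding fracg_def by linarith

lemma fracg_pos: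
  assumes "0 \<le> \<gamma>" "\<gamma> \<notin> \<nat>"
  shows "0 < fracg \<gamma>"
proof (rule ccontr)
  assume "\<not> 0 < fracg \<gamma>"
  then have "\<gamma> = of_int \<lfloor>\<gamma>\<rfloor>"
    using of_int_floor_le[of \<gamma>] unfolding fracg_def by linarith
  also have "\<dots> = real (nat \<lfloor>\<gamma>\<rfloor>)" using assms(1) by simp
  finally show False using assms(2) of_nat_in_Nats by metis
qed

lemma rho_expansion_raw_even:
  fixes U :: "'a::euclidean_space \<Rightarrow> real"
  assumes U: "rho_expansion (2 * fracg \<gamma>) U" and "0 \<le> \<gamma>" "j \<le> nat \<lfloor>\<gamma>\<rfloor> + 1"
  shows "rho_expansion (2 * fracg \<gamma>) (raw_even \<gamma> j U)"
proof -
  define N where "N = nat \<lfloor>\<gamma>\<rfloor>"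
  define s where "s = sval TYPE('a) \<gamma>"
  have N: "real N = \<gamma> - fracg \<gamma>" unfolding N_def fracg_def using assms(2) by simp
  have "rho_expansion (dimn TYPE('a) / 2 - \<gamma> + 2 * fracg \<gamma>)
      (\<lambda>y. rho y powr (dimn TYPE('a) / 2 - \<gamma>) * U y)"
    by (rule rho_expansion_powr_mult[OF U])
  then have "rho_expansion (s - 2 * real N) (\<lambda>y. rho y powr (dimn TYPE('a) / 2 - \<gamma>) * U y)"
    unfolding s_def sval_def N by (simp add: algebra_simps)
  from rho_expansion_Ds[OF rho_expansion_Ds_first_root[OF this assms(3)[folded N_def]],
      of "map (\<lambda>l. s - 2 * real l) [0..<j]"]
  have "rho_expansion (s - 2 * real N + 2 * real j)
      (Ds (map (\<lambda>l. s - 2 * real l) ([0..<j] @ [N + 1 - j..<N + 1]))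
        (\<lambda>y. rho y powr (dimn TYPE('a) / 2 - \<gamma>) * U y))"
    by (simp add: Ds_append)
  from rho_expansion_powr_mult[OF this, of "- dimn TYPE('a) / 2 + \<gamma> - 2 * real j"]
  show ?thesis
    unfolding raw_even_def s_def N_def[symmetric] by (simp add: sval_def N algebra_simps)
qed

lemma rho_expansion_raw_odd:
  fixes U :: "'a::euclidean_space \<Rightarrow> real"
  assumes U: "rho_expansion 0 U"
  shows "rho_expansion (2 - 2 * fracg \<gamma>) (raw_odd \<gamma> j U)"
proof -
  define N where "N = nat \<lfloor>\<gamma>\<rfloor>"
  define s where "s = sval TYPE('a) \<gamma>"
  define F where "F l = s - 2 * real l" for l :: nat
  define w where "w = Ds (map F [N + 1 - j..<N + 1]) (\<lambda>y. rho y powr (dimn TYPE('a) / 2 - \<gamma>) * U y)"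
  have "rho_expansion (dimn TYPE('a) / 2 - \<gamma> + 0) (\<lambda>y. rho y powr (dimn TYPE('a) / 2 - \<gamma>) * U y)"
    by (rule rho_expansion_powr_mult[OF U])
  then have w: "rho_expansion (dimn TYPE('a) - s) w"
    unfolding w_def s_def sval_def by (intro rho_expansion_Ds) (simp add: algebra_simps)
  have "rho_expansion (dimn TYPE('a) - s + 2 * real (j + 1)) (Ds (map F (rev [0..<j + 1])) w)"
    unfolding F_def by (rule rho_expansion_Ds_second_root[OF w])
  txt \<open>\<open>raw_odd\<close> applies \<open>D\<^bsub>s-2j\<^esub>\<close> first, whereas the roots require \<open>D\<^sub>s\<close> first.\<close>
  moreover have "Ds (map F (rev [0..<j + 1])) w x = Ds (map F [0..<j + 1]) w x"
    if "x \<in> punctured_ball" for x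
    using Ds_rev_rho_expansion[OF w that, of "map F [0..<j + 1]"] by (simp add: rev_map)
  ultimately have "rho_expansion (dimn TYPE('a) - s + 2 * real (j + 1)) (Ds (map F [0..<j + 1]) w)"
    by (rule rho_expansion_cong)
  from rho_expansion_powr_mult[OF this, of "- dimn TYPE('a) / 2 + \<gamma> - 2 * real j - 2 * fracg \<gamma>"]
  have "rho_expansion (2 - 2 * fracg \<gamma>) (\<lambda>x. rho x powr (- dimn TYPE('a) / 2 + \<gamma> - 2 * real j - 2 * fracg \<gamma>)
      * Ds (map F [0..<j + 1]) w x)"
    by (simp add: s_def sval_def algebra_simps)
  moreover have "raw_odd \<gamma> j U = (\<lambda>x. rho x powr (- dimn TYPE('a) / 2 + \<gamma> - 2 * real j - 2 * fracg \<gamma>)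
      * Ds (map F [0..<j + 1]) w x)"
    unfolding raw_odd_def w_def F_def s_def N_def by (simp only: map_append Ds_append)
  ultimately show ?thesis by simp
qed

text \<open>The normalising constants enter only through their constancy along rays; their values,
  possibly 0 (and then \<open>1 / 0 = 0\<close>), are irrelevant.\<close>

lemma b_even_scaleR: "norm \<theta> = 1 \<Longrightarrow> 0 < r \<Longrightarrow> b_even \<gamma> j (r *\<^sub>R \<theta>) = b_even \<gamma> j \<theta>"
  unfolding b_even_def by simp

lemma b_odd_scaleR: "norm \<theta> = 1 \<Longrightarrow> 0 < r \<Longrightarrow> b_odd \<gamma> j (r *\<^sub>R \<theta>) = b_odd \<gamma> j \<theta>"
  unfolding b_odd_def by simp

lemma tendsto_Bpre_even:
  assumes "rho_expansion b U" "rho_expansion b (raw_even \<gamma> j U)" "0 < b" "norm \<theta> = 1"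
  shows "((\<lambda>r. Bpre_even \<gamma> j U (r *\<^sub>R \<theta>)) \<longlongrightarrow> 0) (at_left 1)"
proof (cases "j = 0")
  case True
  then show ?thesis
    using tendsto_rho_expansion_ray[OF assms(1,3,4)] by (simp add: Bpre_even_def)
next
  case False
  have "\<forall>\<^sub>F r in at_left 1. 1 / b_even \<gamma> j \<theta> * raw_even \<gamma> j U (r *\<^sub>R \<theta>) = Bpre_even \<gamma> j U (r *\<^sub>R \<theta>)"
    using eventually_at_left_1 by eventually_elim (simp add: Bpre_even_def b_even_scaleR assms(4) False)
  moreover have "((\<lambda>r. 1 / b_even \<gamma> j \<theta> * raw_even \<gamma> j U (r *\<^sub>R \<theta>)) \<longlongrightarrow> 1 / b_even \<gamma> j \<theta> * 0) (at_left 1)"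
    by (intro tendsto_mult tendsto_const tendsto_rho_expansion_ray[OF assms(2-4)])
  ultimately show ?thesis by (simp add: tendsto_cong)
qed

lemma tendsto_Bpre_odd:
  assumes "rho_expansion b (raw_odd \<gamma> j U)" "0 < b" "norm \<theta> = 1"
  shows "((\<lambda>r. Bpre_odd \<gamma> j U (r *\<^sub>R \<theta>)) \<longlongrightarrow> 0) (at_left 1)"
proof -
  have "\<forall>\<^sub>F r in at_left 1. -1 / b_odd \<gamma> j \<theta> * raw_odd \<gamma> j U (r *\<^sub>R \<theta>) = Bpre_odd \<gamma> j U (r *\<^sub>R \<theta>)"
    using eventually_at_left_1 by eventually_elim (simp add: Bpre_odd_def b_odd_scaleR assms(3))
  moreover have "((\<lambda>r. -1 / b_odd \<gamma> j \<theta> * raw_odd \<gamma> j U (r *\<^sub>R \<theta>)) \<longlongrightarrow> -1 / b_odd \<gamma> j \<theta> * 0) (at_left 1)"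
    by (intro tendsto_mult tendsto_const tendsto_rho_expansion_ray[OF assms])
  ultimately show ?thesis by (simp add: tendsto_cong)
qed

lemma tendsto_Bpre_even_rho_powr:
  assumes g: "smooth_hom0 g" and "0 \<le> \<gamma>" "\<gamma> \<notin> \<nat>" "j \<le> nat \<lfloor>\<gamma>\<rfloor> + 1" "norm \<theta> = 1"
  shows "((\<lambda>r. Bpre_even \<gamma> j (\<lambda>x. rho x powr (2 * fracg \<gamma> + 2 * real m) * g x) (r *\<^sub>R \<theta>))
    \<longlongrightarrow> 0) (at_left 1)"
proof -
  have U: "rho_expansion (2 * fracg \<gamma>) (\<lambda>x. rho x powr (2 * fracg \<gamma> + 2 * real m) * g x)"
    by (rule rho_expansion_weaken[OF rho_expansion_rho_powr[OF g]])
  show ?thesis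
    using fracg_pos[of \<gamma>] assms(2-5)
    by (intro tendsto_Bpre_even[OF U rho_expansion_raw_even[OF U]]) auto
qed

lemma tendsto_Bpre_odd_rho_powr:
  assumes g: "smooth_hom0 g" and "norm \<theta> = 1"
  shows "((\<lambda>r. Bpre_odd \<gamma> j (\<lambda>x. rho x powr (2 * real m) * g x) (r *\<^sub>R \<theta>)) \<longlongrightarrow> 0) (at_left 1)"
proof -
  have U: "rho_expansion 0 (\<lambda>x. rho x powr (2 * real m) * g x)"
    using rho_expansion_weaken[of 0 m] rho_expansion_rho_powr[OF g, of "2 * real m"] by simp
  show ?thesis
    using fracg_less_1[of \<gamma>] assms(2)
    by (intro tendsto_Bpre_odd[OF rho_expansion_raw_odd[OF U]]) auto
qed

text \<open>Neither \<open>DIM('a) \<ge> 2\<close> nor the upper bound on \<open>j\<close> in the odd case is needed.\<close>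

theorem lemma4p6:
  fixes \<gamma> :: real and f :: "'a::euclidean_space \<Rightarrow> real" and m :: nat
  assumes "DIM('a) \<ge> 2"
    and "\<gamma> > 0" and "\<gamma> \<notin> \<nat>"
    and "smooth_on_sphere f"
  shows "(\<forall>j. j \<le> nat \<lfloor>\<gamma> / 2\<rfloor> \<longrightarrow> (\<forall>\<theta>\<in>sphere 0 1.
            ((\<lambda>r. Bpre_even \<gamma> j (\<lambda>x. rho x powr (2 * fracg \<gamma> + 2 * real m) * f (x /\<^sub>R norm x))
                       (r *\<^sub>R \<theta>)) \<longlongrightarrow> 0) (at_left 1)))
       \<and> (\<forall>j. j + 1 + nat \<lfloor>\<gamma> / 2\<rfloor> \<le> nat \<lfloor>\<gamma>\<rfloor> \<longrightarrow> (\<forall>\<theta>\<in>sphere 0 1.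
            ((\<lambda>r. Bpre_odd \<gamma> j (\<lambda>x. rho x powr (2 * real m) * f (x /\<^sub>R norm x))
                       (r *\<^sub>R \<theta>)) \<longlongrightarrow> 0) (at_left 1)))"
proof (intro conjI allI impI ballI)
  note g = smooth_on_sphere_imp_smooth_hom0[OF assms(4)]
  fix j :: nat and \<theta> :: 'a
  assume "j \<le> nat \<lfloor>\<gamma> / 2\<rfloor>" "\<theta> \<in> sphere 0 1"
  moreover have "nat \<lfloor>\<gamma> / 2\<rfloor> \<le> nat \<lfloor>\<gamma>\<rfloor>"
    using assms(2) by (intro nat_mono floor_mono) simp
  ultimately show "((\<lambda>r. Bpre_even \<gamma> j (\<lambda>x. rho x powr (2 * fracg \<gamma> + 2 * real m) * f (x /\<^sub>R norm x))
      (r *\<^sub>R \<theta>)) \<longlongrightarrow> 0) (at_left 1)"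
    using tendsto_Bpre_even_rho_powr[OF g] assms(2,3) by simp
next
  note g = smooth_on_sphere_imp_smooth_hom0[OF assms(4)]
  fix j :: nat and \<theta> :: 'a
  assume "\<theta> \<in> sphere 0 1"
  then show "((\<lambda>r. Bpre_odd \<gamma> j (\<lambda>x. rho x powr (2 * real m) * f (x /\<^sub>R norm x)) (r *\<^sub>R \<theta>))
    \<longlongrightarrow> 0) (at_left 1)"
    using tendsto_Bpre_odd_rho_powr[OF g] by simp
qed

end
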